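(* Consider the panel change point model \[ Y_{i,t}=\mu_i+\delta_i\,\mathbb{I}\{t>\tau\}+\sigma\varepsilon_{i,t},\qquad 1\le i\le N,\ 1\le t\le T, \] with $T\ge 4$ fixed (not depending on $N$), under the null hypothesis $H_0:\tau=T$ (no change), and suppose the error assumption stated in the context holds. Define \[ \mathcal{C}_N(T)=\frac{1}{\sqrt{N}}\max_{t=1,\ldots,T-1}\Big|\sum_{i=1}^N\sum_{s=1}^t\big(Y_{i,s}-\bar Y_{i,T}\big)\Big|, \] \[ \mathcal{R}_N(T)=\max_{t=2,\ldots,T-2}\frac{\max_{s=1,\ldots,t}\Big|\sum_{i=1}^N\sum_{r=1}^s\big(Y_{i,r}-\bar Y_{i,t}\big)\Big|}{\max_{s=t,\ldots,T-1}\Big|\sum_{i=1}^N\sum_{r=s+1}^T\big(Y_{i,r}-\tilde Y_{i,t}\big)\Big|}, \] where $\bar Y_{i,t}=\frac1t\sum_{s=1}^tY_{i,s}$ and $\tilde Y_{i,t}=\frac{1}{T-t}\sum_{s=t+1}^TY_{i,s}$. Then, as $N\to\infty$, \[ \mathcal{C}_N(T)\xrightarrow{\ \mathscr{D}\ }\sigma\max_{t=1,\ldots,T-1}\Big|X_t-\frac tT X_T\Big| \] and \[ \mathcal{R}_N(T)\xrightarrow{\ \mathscr{D}\ }\max_{t=2,\ldots,T-2}\frac{\max_{s=1,\ldots,t}\big|X_s-\frac st X_t\big|}{\max_{s=t,\ldots,T-1}\big|Z_s-\frac{T-s}{T-t}Z_t\big|}, \] where $Z_t:=X_T-X_t$ and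 $[X_1,\ldots,X_T]^\top$ is a multivariate normal random vector with zero mean and covariance matrix $\Lambda=\{\lambda_{t,v}\}_{t,v=1}^T$ given by $\lambda_{t,t}=r(t)$ and $\lambda_{t,v}=\lambda_{v,t}=r(t)+R(t,v)$ for $t<v$.
   Context: In the model, $\sigma>0$ is an unknown scale parameter, $\mu_i\in\mathbb{R}$ are panel-specific means, $\delta_i\in\mathbb{R}$ are panel-specific change sizes, and $\tau\in\{1,\ldots,T\}$ is the common change point ($\tau=T$ means no change). Error assumption: the random vectors $[\varepsilon_{i,1},\ldots,\varepsilon_{i,T}]^\top$, $i=1,\ldots,N$, defined on a probability space $(\Omega,\mathcal F,\mathsf P)$, are i.i.d. across $i$, with $\mathsf E\varepsilon_{i,t}=0$, $\mathsf{Var}\,\varepsilon_{i,t}=1$, and autocorrelation $\rho_t=\mathsf{Cov}(\varepsilon_{i,s},\varepsilon_{i,s+t})$ not depending on $s\in\{1,\ldots,T-t\}$ (with $\rho_{-t}=\rho_t$, $\rho_0=1$). The cumulative autocorrelation function is $r(t)=\mathsf{Var}\sum_{s=1}^t\varepsilon_{i,s}=\sum_{|s|<t}(t-|s|)\rho_s$, and the shifted cumulative correlation function is $R(t,v)=\mathsf{Cov}\big(\sum_{s=1}^t\varepsilon_{i,s},\sum_{u=t+1}^v\varepsilon_{i,u}\big)=\sum_{s=1}^t\sum_{u=t+1}^v\rho_{u-s}$ for $t<v$. *)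

theory Defs
  imports "HOL-Probability.Probability"
begin

definition cumr :: "(nat \<Rightarrow> real) \<Rightarrow> nat \<Rightarrow> real" where
  "cumr rho t = (\<Sum>s\<in>{-(int t)+1..int t - 1}. (real t - real_of_int \<bar>s\<bar>) * rho (nat \<bar>s\<bar>))"

definition shiftR :: "(nat \<Rightarrow> real) \<Rightarrow> nat \<Rightarrow> nat \<Rightarrow> real" where
  "shiftR rho t v = (\<Sum>s\<in>{1..t}. \<Sum>u\<in>{t+1..v}. rho (u - s))"

definition Lam :: "(nat \<Rightarrow> real) \<Rightarrow> nat \<Rightarrow> nat \<Rightarrow> real" where
  "Lam rho t v = (if t = v then cumr rho t
                  else if t < v then cumr rho t + shiftR rho t v
                  else cumr rho v + shiftR rho v t)"

text \<open>[X_1,...,X_T] is centred multivariate normal with covariance matrix L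
  (defined via the characteristic function, allowing singular L).\<close>
definition centered_mvnormal ::
  "'b measure \<Rightarrow> (nat \<Rightarrow> 'b \<Rightarrow> real) \<Rightarrow> nat \<Rightarrow> (nat \<Rightarrow> nat \<Rightarrow> real) \<Rightarrow> bool" where
  "centered_mvnormal P X T L \<longleftrightarrow>
     prob_space P \<and> (\<forall>t\<in>{1..T}. X t \<in> borel_measurable P) \<and>
     (\<forall>c :: nat \<Rightarrow> real.
        (CLINT \<omega>|P. iexp (\<Sum>t\<in>{1..T}. c t * X t \<omega>)) =
        complex_of_real (exp (- (\<Sum>t\<in>{1..T}. \<Sum>v\<in>{1..T}. c t * c v * L t v) / 2)))"

definition panelY ::
  "(nat \<Rightarrow> real) \<Rightarrow> (nat \<Rightarrow> real) \<Rightarrow> nat \<Rightarrow> real \<Rightarrow> (nat \<Rightarrow> nat \<Rightarrow> 'a \<Rightarrow> real)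
   \<Rightarrow> nat \<Rightarrow> nat \<Rightarrow> 'a \<Rightarrow> real" where
  "panelY mu delta tau sig eps i t \<omega> =
     mu i + delta i * (if t > tau then 1 else 0) + sig * eps i t \<omega>"

definition Ybar :: "(nat \<Rightarrow> nat \<Rightarrow> 'a \<Rightarrow> real) \<Rightarrow> nat \<Rightarrow> nat \<Rightarrow> 'a \<Rightarrow> real" where
  "Ybar Y i t \<omega> = (1 / real t) * (\<Sum>s\<in>{1..t}. Y i s \<omega>)"

definition Ytil :: "nat \<Rightarrow> (nat \<Rightarrow> nat \<Rightarrow> 'a \<Rightarrow> real) \<Rightarrow> nat \<Rightarrow> nat \<Rightarrow> 'a \<Rightarrow> real" where
  "Ytil T Y i t \<omega> = (1 / (real T - real t)) * (\<Sum>s\<in>{t+1..T}. Y i s \<omega>)"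

definition statC :: "nat \<Rightarrow> (nat \<Rightarrow> nat \<Rightarrow> 'a \<Rightarrow> real) \<Rightarrow> nat \<Rightarrow> 'a \<Rightarrow> real" where
  "statC T Y N \<omega> = (1 / sqrt (real N)) *
     Max ((\<lambda>t. \<bar>\<Sum>i\<in>{1..N}. \<Sum>s\<in>{1..t}. (Y i s \<omega> - Ybar Y i T \<omega>)\<bar>) ` {1..T-1})"

definition statR :: "nat \<Rightarrow> (nat \<Rightarrow> nat \<Rightarrow> 'a \<Rightarrow> real) \<Rightarrow> nat \<Rightarrow> 'a \<Rightarrow> real" where
  "statR T Y N \<omega> = Max ((\<lambda>t.
       Max ((\<lambda>s. \<bar>\<Sum>i\<in>{1..N}. \<Sum>r\<in>{1..s}. (Y i r \<omega> - Ybar Y i t \<omega>)\<bar>) ` {1..t}) /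
       Max ((\<lambda>s. \<bar>\<Sum>i\<in>{1..N}. \<Sum>r\<in>{s+1..T}. (Y i r \<omega> - Ytil T Y i t \<omega>)\<bar>) ` {t..T-1}))
     ` {2..T-2})"

definition limC :: "nat \<Rightarrow> real \<Rightarrow> (nat \<Rightarrow> 'b \<Rightarrow> real) \<Rightarrow> 'b \<Rightarrow> real" where
  "limC T sig X \<omega> = sig * Max ((\<lambda>t. \<bar>X t \<omega> - real t / real T * X T \<omega>\<bar>) ` {1..T-1})"

definition limR :: "nat \<Rightarrow> (nat \<Rightarrow> 'b \<Rightarrow> real) \<Rightarrow> 'b \<Rightarrow> real" where
  "limR T X \<omega> = (let Z = (\<lambda>t. X T \<omega> - X t \<omega>) in
     Max ((\<lambda>t.
       Max ((\<lambda>s. \<bar>X s \<omega> - real s / real t * X t \<omega>\<bar>) ` {1..t}) /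
       Max ((\<lambda>s. \<bar>Z s - (real T - real s) / (real T - real t) * Z t\<bar>) ` {t..T-1}))
     ` {2..T-2}))"

end

theory Submission
  imports Defs
begin

(*
  Under the null hypothesis the panel means cancel in both statistics, and they become continuous,
  or (for the ratio) almost continuous, functions of the vector S_N(t) = N^(-1/2) sum_i sum_{s<=t} eps_{i,s},
  t = 1..T. Every linear combination of S_N is a normalised sum of i.i.d. variables with variance
  c' Lambda c, so the central limit theorem gives convergence of the characteristic functions of S_N to
  those of the Gaussian vector X. A multivariate continuity theorem, proved via Stone-Weierstrass on a
  torus, upgrades this to convergence of all bounded continuous expectations, and the continuous mapping
  theorem finishes the CUSUM statistic. For the ratio, if rho_1 = 1 all errors of a panel coincide and
  both sides vanish; otherwise every second difference of X is a nondegenerate Gaussian, so the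
  denominators of the limit are almost surely positive and the discontinuity set of the ratio is null.
*)

section \<open>A continuity theorem for random vectors\<close>

definition cutoff :: "real \<Rightarrow> real" where
  "cutoff y = max 0 (min 1 (2 - \<bar>y\<bar>))"

lemma cutoff_nonneg: "0 \<le> cutoff y" and cutoff_le_1: "cutoff y \<le> 1"
  by (auto simp: cutoff_def)

lemma abs_cutoff_le_1: "\<bar>cutoff y\<bar> \<le> 1"
  by (auto simp: cutoff_def)

lemma cutoff_eq_1: "\<bar>y\<bar> \<le> 1 \<Longrightarrow> cutoff y = 1"
  by (auto simp: cutoff_def)

lemma cutoff_eq_0: "\<bar>y\<bar> \<ge> 2 \<Longrightarrow> cutoff y = 0"
  by (auto simp: cutoff_def)

lemma continuous_on_cutoff: "continuous_on UNIV cutoff"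
  unfolding cutoff_def by (intro continuous_intros)

lemma borel_measurable_cutoff [measurable]: "cutoff \<in> borel_measurable borel"
  by (rule borel_measurable_continuous_onI[OF continuous_on_cutoff])

lemma continuous_on_cutoff_comp:
  "continuous_on UNIV f \<Longrightarrow> continuous_on UNIV (\<lambda>x. cutoff (f x / d))"
  unfolding divide_inverse
  by (intro continuous_on_compose2[OF continuous_on_cutoff] continuous_intros) auto

lemma continuous_on_component: "continuous_on UNIV (\<lambda>x::nat \<Rightarrow> 'b::topological_space. x t)"
  using continuous_on_product_then_coordinatewise[OF continuous_on_id, of UNIV t] by simp

lemma one_minus_prod_le_sum:
  fixes a :: "'i \<Rightarrow> real"
  assumes "finite I" "\<And>i. i \<in> I \<Longrightarrow> 0 \<le> a i \<and> a i \<le> 1"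
  shows "1 - prod a I \<le> (\<Sum>i\<in>I. 1 - a i)"
  using assms
proof (induction I rule: finite_induct)
  case (insert i F)
  have "0 \<le> prod a F" "prod a F \<le> 1" "0 \<le> a i" "a i \<le> 1"
    using insert by (auto intro: prod_nonneg prod_le_1)
  then have "0 \<le> (1 - a i) * (1 - prod a F)"
    by simp
  then have "1 - a i * prod a F \<le> (1 - a i) + (1 - prod a F)"
    by (simp add: algebra_simps)
  with insert show ?case by simp
qed simp

lemma integrable_bounded_comp:
  fixes f :: "'c \<Rightarrow> 'd::{banach, second_countable_topology}"
  assumes "prob_space M" "W \<in> measurable M N" "f \<in> borel_measurable N" "\<And>x. norm (f x) \<le> B"
  shows "integrable M (\<lambda>\<omega>. f (W \<omega>))"
proof -
  interpret prob_space M by fact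
  show ?thesis
    by (intro integrable_const_bound[where B=B] measurable_compose[OF assms(2,3)]) (use assms(4) in auto)
qed

lemma expectation_diff_bound:
  fixes F H :: "'a \<Rightarrow> real" and R :: "'i \<Rightarrow> 'a \<Rightarrow> real"
  assumes "prob_space Q" "finite A"
    and "integrable Q F" "integrable Q H" "\<And>t. t \<in> A \<Longrightarrow> integrable Q (R t)"
    and bound: "\<And>\<omega>. \<bar>F \<omega> - H \<omega>\<bar> \<le> e + c * (\<Sum>t\<in>A. R t \<omega>)"
  shows "\<bar>(\<integral>\<omega>. F \<omega> \<partial>Q) - (\<integral>\<omega>. H \<omega> \<partial>Q)\<bar> \<le> e + c * (\<Sum>t\<in>A. \<integral>\<omega>. R t \<omega> \<partial>Q)"
proof -
  interpret prob_space Q by fact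
  have R: "integrable Q (\<lambda>\<omega>. e + c * (\<Sum>t\<in>A. R t \<omega>))"
    using assms(5) by (intro Bochner_Integration.integrable_add integrable_mult_right) auto
  have "\<bar>(\<integral>\<omega>. F \<omega> \<partial>Q) - (\<integral>\<omega>. H \<omega> \<partial>Q)\<bar> = \<bar>\<integral>\<omega>. F \<omega> - H \<omega> \<partial>Q\<bar>"
    using assms(3,4) by simp
  also have "\<dots> \<le> (\<integral>\<omega>. \<bar>F \<omega> - H \<omega>\<bar> \<partial>Q)"
    by (rule integral_abs_bound)
  also have "\<dots> \<le> (\<integral>\<omega>. e + c * (\<Sum>t\<in>A. R t \<omega>) \<partial>Q)"
    by (rule integral_mono[OF _ R]) (use assms(3,4) bound in auto)
  also have "\<dots> = e + c * (\<Sum>t\<in>A. \<integral>\<omega>. R t \<omega> \<partial>Q)"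
    using assms(5) by (simp add: Bochner_Integration.integral_sum prob_space)
  finally show ?thesis .
qed

lemma LIMSEQ_by_approximation:
  fixes a :: "nat \<Rightarrow> real" and b c :: "nat \<Rightarrow> nat \<Rightarrow> real"
  assumes b: "\<And>k. (\<lambda>N. b k N) \<longlonglongrightarrow> b' k" and c: "\<And>k. (\<lambda>N. c k N) \<longlonglongrightarrow> c' k"
    and approx: "\<And>k N. \<bar>a N - b k N\<bar> \<le> c k N" and approx': "\<And>k. \<bar>a' - b' k\<bar> \<le> c' k"
    and c'_0: "c' \<longlonglongrightarrow> 0"
  shows "a \<longlonglongrightarrow> a'"
proof (rule LIMSEQ_I)
  fix r :: real assume "0 < r"
  then have r: "r / 4 > 0" by simp
  obtain k where k: "\<bar>c' k\<bar> < r / 4"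
    using tendstoD[OF c'_0 r] by (auto simp: eventually_sequentially)
  have "\<forall>\<^sub>F N in sequentially. \<bar>b k N - b' k\<bar> < r / 4 \<and> \<bar>c k N - c' k\<bar> < r / 4"
    using tendstoD[OF b r] tendstoD[OF c r] by eventually_elim (simp add: dist_real_def)
  then obtain N0 where N0: "\<And>N. N \<ge> N0 \<Longrightarrow> \<bar>b k N - b' k\<bar> < r / 4 \<and> \<bar>c k N - c' k\<bar> < r / 4"
    by (auto simp: eventually_sequentially)
  show "\<exists>N0. \<forall>N\<ge>N0. norm (a N - a') < r"
  proof (intro exI allI impI)
    fix N assume "N0 \<le> N"
    then have "\<bar>b k N - b' k\<bar> < r / 4" "\<bar>c k N - c' k\<bar> < r / 4" using N0 by auto
    moreover have "\<bar>a N - a'\<bar> \<le> \<bar>a N - b k N\<bar> + \<bar>b k N - b' k\<bar> + \<bar>a' - b' k\<bar>"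
      by linarith
    ultimately show "norm (a N - a') < r"
      unfolding real_norm_def using approx[of N k] approx'[of k] k by linarith
  qed
qed

lemma sum_if_eq_mult:
  fixes x :: "'i \<Rightarrow> 'r::comm_semiring_0"
  assumes "finite I" "t \<in> I"
  shows "(\<Sum>s\<in>I. (if s = t then a else 0) * x s) = a * x t"
  using assms by (simp add: if_distrib[of "\<lambda>c. c * x _"] sum.delta cong: if_cong)

inductive trig_poly :: "nat set \<Rightarrow> ((nat \<Rightarrow> real) \<Rightarrow> complex) \<Rightarrow> bool" for I where
  trig_poly_iexp: "trig_poly I (\<lambda>x. iexp (\<Sum>t\<in>I. c t * x t))"
| trig_poly_add: "trig_poly I f \<Longrightarrow> trig_poly I g \<Longrightarrow> trig_poly I (\<lambda>x. f x + g x)"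
| trig_poly_scale: "trig_poly I f \<Longrightarrow> trig_poly I (\<lambda>x. a * f x)"

lemma trig_poly_const: "trig_poly I (\<lambda>x. a)"
  using trig_poly_scale[OF trig_poly_iexp[of I "\<lambda>_. 0"], of a] by simp

lemma trig_poly_iexp_component:
  assumes "finite I" "t \<in> I"
  shows "trig_poly I (\<lambda>x. iexp (a * x t))"
  using trig_poly_iexp[of I "\<lambda>s. if s = t then a else 0"] unfolding sum_if_eq_mult[OF assms] .

lemma trig_poly_iexp_mult:
  assumes "trig_poly I g"
  shows "trig_poly I (\<lambda>x. iexp (\<Sum>t\<in>I. c t * x t) * g x)"
  using assms
proof induction
  case (trig_poly_iexp d)
  have "(\<lambda>x. iexp (\<Sum>t\<in>I. c t * x t) * iexp (\<Sum>t\<in>I. d t * x t)) =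
        (\<lambda>x. iexp (\<Sum>t\<in>I. (c t + d t) * x t))"
    by (auto simp: exp_add[symmetric] distrib_right sum.distrib algebra_simps)
  then show ?case using trig_poly.trig_poly_iexp by metis
next
  case (trig_poly_add f g)
  then show ?case using trig_poly.trig_poly_add by (simp add: distrib_left)
next
  case (trig_poly_scale f a)
  then show ?case using trig_poly.trig_poly_scale[OF trig_poly_scale.IH, of a] by (simp add: algebra_simps)
qed

lemma trig_poly_mult:
  assumes "trig_poly I f" "trig_poly I g"
  shows "trig_poly I (\<lambda>x. f x * g x)"
  using assms(1)
proof induction
  case (trig_poly_iexp c)
  then show ?case using trig_poly_iexp_mult[OF assms(2)] by simp
next
  case (trig_poly_add f1 f2)
  then show ?case using trig_poly.trig_poly_add by (simp add: distrib_right)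
next
  case (trig_poly_scale f a)
  then show ?case using trig_poly.trig_poly_scale[OF trig_poly_scale.IH, of a] by (simp add: algebra_simps)
qed

lemma continuous_on_trig_poly: "trig_poly I f \<Longrightarrow> continuous_on UNIV f"
  by (induction rule: trig_poly.induct)
     (auto intro!: continuous_intros continuous_on_component)

lemma trig_poly_bounded: "trig_poly I f \<Longrightarrow> \<exists>B. \<forall>x. norm (f x) \<le> B"
proof (induction rule: trig_poly.induct)
  case (trig_poly_iexp c)
  then show ?case by (intro exI[of _ 1]) (simp add: norm_exp_i_times)
next
  case (trig_poly_add f g)
  then obtain B1 B2 where "\<forall>x. norm (f x) \<le> B1" "\<forall>x. norm (g x) \<le> B2" by blast
  then show ?case by (intro exI[of _ "B1 + B2"]) (metis add_mono norm_triangle_le)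
next
  case (trig_poly_scale f a)
  then obtain B where "\<forall>x. norm (f x) \<le> B" by blast
  then show ?case by (intro exI[of _ "norm a * B"]) (auto simp: norm_mult intro: mult_left_mono)
qed

lemma integrable_trig_poly:
  assumes "prob_space M" "W \<in> borel_measurable M" "trig_poly I f"
  shows "integrable M (\<lambda>\<omega>. f (W \<omega>))"
  using trig_poly_bounded[OF assms(3)]
  by (auto intro: integrable_bounded_comp[OF assms(1,2)]
      borel_measurable_continuous_onI[OF continuous_on_trig_poly[OF assms(3)]])

lemma trig_poly_expectation_conv:
  fixes V :: "nat \<Rightarrow> 'a \<Rightarrow> nat \<Rightarrow> real" and G :: "'b \<Rightarrow> nat \<Rightarrow> real"
  assumes M: "prob_space M" and P: "prob_space P"
    and V: "\<And>N. V N \<in> borel_measurable M" and G: "G \<in> borel_measurable P"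
    and charfun: "\<And>c. (\<lambda>N. CLINT \<omega>|M. iexp (\<Sum>t\<in>I. c t * V N \<omega> t))
                      \<longlonglongrightarrow> (CLINT \<omega>|P. iexp (\<Sum>t\<in>I. c t * G \<omega> t))"
    and "trig_poly I f"
  shows "(\<lambda>N. CLINT \<omega>|M. f (V N \<omega>)) \<longlonglongrightarrow> (CLINT \<omega>|P. f (G \<omega>))"
  using \<open>trig_poly I f\<close>
proof induction
  case (trig_poly_iexp c)
  then show ?case using charfun by simp
next
  case (trig_poly_add f g)
  then show ?case
    using integrable_trig_poly[OF M V] integrable_trig_poly[OF P G]
    by (simp add: tendsto_add)
next
  case (trig_poly_scale f a)
  then show ?case by (simp add: tendsto_mult_left)
qed

subsection \<open>Stone--Weierstrass on the torus\<close>

inductive torus_poly :: "((nat \<Rightarrow> complex) \<Rightarrow> real) \<Rightarrow> bool" where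
  torus_poly_const: "torus_poly (\<lambda>_. c)"
| torus_poly_Re: "torus_poly (\<lambda>u. Re (u t))"
| torus_poly_Im: "torus_poly (\<lambda>u. Im (u t))"
| torus_poly_add: "torus_poly f \<Longrightarrow> torus_poly g \<Longrightarrow> torus_poly (\<lambda>x. f x + g x)"
| torus_poly_mult: "torus_poly f \<Longrightarrow> torus_poly g \<Longrightarrow> torus_poly (\<lambda>x. f x * g x)"

definition torus :: "nat set \<Rightarrow> (nat \<Rightarrow> complex) set" where
  "torus I = PiE UNIV (\<lambda>t. if t \<in> I then sphere 0 1 else {1})"

definition torus_embed :: "real \<Rightarrow> nat set \<Rightarrow> (nat \<Rightarrow> real) \<Rightarrow> nat \<Rightarrow> complex" where
  "torus_embed w I x = (\<lambda>t. if t \<in> I then iexp (w * x t) else 1)"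

definition torus_angle :: "real \<Rightarrow> nat set \<Rightarrow> (nat \<Rightarrow> complex) \<Rightarrow> nat \<Rightarrow> real" where
  "torus_angle w I u = (\<lambda>t. if t \<in> I then Arg (u t) / w else 0)"

definition cutoff_prod :: "nat set \<Rightarrow> real \<Rightarrow> (nat \<Rightarrow> real) \<Rightarrow> real" where
  "cutoff_prod I K x = (\<Prod>t\<in>I. cutoff (x t / K))"

lemma continuous_on_cutoff_prod: "continuous_on UNIV (cutoff_prod I K)"
  unfolding cutoff_prod_def
  by (intro continuous_on_prod continuous_on_cutoff_comp continuous_on_component)

lemma cutoff_prod_bounds: "finite I \<Longrightarrow> 0 \<le> cutoff_prod I K x \<and> cutoff_prod I K x \<le> 1"
  unfolding cutoff_prod_def by (auto intro: prod_nonneg prod_le_1 cutoff_nonneg cutoff_le_1)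

lemma compact_torus: "compact (torus I)"
proof -
  have "compactin (product_topology (\<lambda>i. euclidean) UNIV) (torus I)"
    unfolding torus_def compactin_PiE by (auto simp: compact_sphere)
  then show ?thesis by (simp add: euclidean_product_topology)
qed

lemma torus_iff: "u \<in> torus I \<longleftrightarrow> (\<forall>t. if t \<in> I then norm (u t) = 1 else u t = 1)"
  unfolding torus_def by (auto simp: PiE_iff)

lemma torus_embed_in_torus: "torus_embed w I x \<in> torus I"
  by (auto simp: torus_iff torus_embed_def norm_exp_i_times)

lemma continuous_on_torus_poly: "torus_poly p \<Longrightarrow> continuous_on UNIV p"
  by (induction rule: torus_poly.induct) (auto intro!: continuous_intros continuous_on_component)

lemma torus_poly_dense:
  assumes "continuous_on (torus I) F" "e > 0"
  obtains p where "torus_poly p" "\<And>u. u \<in> torus I \<Longrightarrow> \<bar>F u - p u\<bar> < e"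
proof -
  have separating: "\<exists>f. torus_poly f \<and> f u \<noteq> f v" if uv: "u \<noteq> v" for u v
  proof -
    obtain t where "u t \<noteq> v t" using uv by blast
    then have "Re (u t) \<noteq> Re (v t) \<or> Im (u t) \<noteq> Im (v t)" by (simp add: complex_eq_iff)
    then show ?thesis using torus_poly_Re[of t] torus_poly_Im[of t] by blast
  qed
  have "\<exists>p. torus_poly p \<and> (\<forall>u\<in>torus I. \<bar>F u - p u\<bar> < e)"
    by (rule Stone_Weierstrass_HOL[OF compact_torus])
       (use assms separating in \<open>auto intro: torus_poly.intros
          continuous_on_subset[OF continuous_on_torus_poly]\<close>)
  with that show ?thesis by blast
qed

lemma trig_poly_torus_poly:
  assumes "finite I" "torus_poly p"
  shows "trig_poly I (\<lambda>x. complex_of_real (p (torus_embed w I x)))"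
  using assms(2)
proof induction
  case (torus_poly_Re t)
  have Re_iexp: "complex_of_real (Re (iexp a)) = (1/2) * iexp a + (1/2) * iexp (- a)" for a
    by (simp only: cis_conv_exp[symmetric]) (simp add: complex_eq_iff)
  show ?case
  proof (cases "t \<in> I")
    case True
    have "complex_of_real (Re (torus_embed w I x t)) = (1/2) * iexp (w * x t) + (1/2) * iexp ((- w) * x t)" for x
      using True Re_iexp[of "w * x t"] by (simp add: torus_embed_def)
    then show ?thesis
      using assms(1) True by (simp only:) (intro trig_poly_add trig_poly_scale trig_poly_iexp_component)
  qed (simp add: torus_embed_def trig_poly_const)
next
  case (torus_poly_Im t)
  have Im_iexp: "complex_of_real (Im (iexp a)) = (- \<i> / 2) * iexp a + (\<i> / 2) * iexp (- a)" for a
    by (simp only: cis_conv_exp[symmetric]) (simp add: complex_eq_iff)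
  show ?case
  proof (cases "t \<in> I")
    case True
    have "complex_of_real (Im (torus_embed w I x t)) = (- \<i> / 2) * iexp (w * x t) + (\<i> / 2) * iexp ((- w) * x t)" for x
      using True Im_iexp[of "w * x t"] by (simp add: torus_embed_def)
    then show ?thesis
      using assms(1) True by (simp only:) (intro trig_poly_add trig_poly_scale trig_poly_iexp_component)
  qed (simp add: torus_embed_def trig_poly_const)
qed (auto intro: trig_poly_const trig_poly_add trig_poly_mult)

lemma abs_Arg_gt_pi_half:
  assumes "norm z = 1" "Re z < 0"
  shows "\<bar>Arg z\<bar> > pi / 2"
proof (rule ccontr)
  assume "\<not> ?thesis"
  then have "cos (Arg z) \<ge> 0" by (intro cos_ge_zero) auto
  moreover have "z = exp (\<i> * Arg z)"
    using assms(1) complex_norm_eq_1_exp_eq by auto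
  then have "Re z = cos (Arg z)"
    by (metis cis.simps(1) cis_conv_exp)
  ultimately show False using assms by simp
qed

lemma continuous_on_torus_angle:
  assumes "finite I"
  shows "continuous_on {v. \<forall>t\<in>I. v t \<in> - \<real>\<^sub>\<le>\<^sub>0} (torus_angle w I)"
proof (rule continuous_on_coordinatewise_then_product)
  fix t
  show "continuous_on {v. \<forall>t\<in>I. v t \<in> - \<real>\<^sub>\<le>\<^sub>0} (\<lambda>v. torus_angle w I v t)"
  proof (cases "t \<in> I")
    case True
    have "continuous_on {v. \<forall>t\<in>I. v t \<in> - \<real>\<^sub>\<le>\<^sub>0} (\<lambda>v. Arg (v t))"
      by (rule continuous_on_compose2[OF continuous_on_Arg])
         (use True in \<open>auto intro: continuous_on_subset[OF continuous_on_component]\<close>)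
    then show ?thesis
      using True by (simp add: torus_angle_def divide_inverse continuous_on_mult_right)
  qed (simp add: torus_angle_def)
qed

lemma cutoff_prod_torus_angle_eq_0:
  assumes "finite I" "K > 0" "t \<in> I" "u \<in> torus I" "Re (u t) < 0"
  shows "cutoff_prod I K (torus_angle (pi / (4 * K)) I u) = 0"
proof -
  have "norm (u t) = 1" using assms(3,4) by (auto simp: torus_iff split: if_splits)
  then have Arg: "\<bar>Arg (u t)\<bar> > pi / 2" using assms(5) by (rule abs_Arg_gt_pi_half)
  have "\<bar>torus_angle (pi / (4 * K)) I u t / K\<bar> = \<bar>Arg (u t)\<bar> * (4 / pi)"
    using assms(2,3) by (simp add: torus_angle_def abs_divide abs_mult field_simps)
  also have "\<dots> > (pi / 2) * (4 / pi)" using Arg by (intro mult_strict_right_mono) auto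
  finally have "cutoff (torus_angle (pi / (4 * K)) I u t / K) = 0" by (intro cutoff_eq_0) simp
  then show ?thesis unfolding cutoff_prod_def using assms(1,3) by (intro prod_zero) auto
qed

text \<open>Composing with \<open>torus_angle\<close> inverts \<open>torus_embed\<close> on the box \<open>\<bar>x t\<bar> < 4 K\<close>; outside the box
  the cutoff kills the function, which makes the lifted function continuous on the whole torus.\<close>
lemma continuous_on_torus_lift:
  assumes I: "finite I" and K: "K > 0" and h: "continuous_on UNIV h"
  defines "w \<equiv> pi / (4 * K)"
  shows "continuous_on (torus I) (\<lambda>u. h (torus_angle w I u) * cutoff_prod I K (torus_angle w I u))"
    (is "continuous_on _ ?F")
proof -
  have "continuous (at u within torus I) ?F" if u: "u \<in> torus I" for u
  proof (cases "\<forall>t\<in>I. u t \<in> - \<real>\<^sub>\<le>\<^sub>0")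
    case True
    define U where "U = {v :: nat \<Rightarrow> complex. \<forall>t\<in>I. v t \<in> - \<real>\<^sub>\<le>\<^sub>0}"
    have "open U"
      unfolding U_def using product_topology_basis'[of I "\<lambda>_. - (\<real>\<^sub>\<le>\<^sub>0 :: complex set)" "\<lambda>t. t"] I
      by (simp add: open_Compl)
    moreover have "continuous_on U ?F"
      using continuous_on_torus_angle[OF I, of w] unfolding U_def
      by (intro continuous_on_mult continuous_on_compose2[OF h]
          continuous_on_compose2[OF continuous_on_cutoff_prod]) auto
    ultimately show ?thesis
      using True continuous_on_eq_continuous_at continuous_at_imp_continuous_at_within
      unfolding U_def by blast
  next
    case False
    then obtain t0 where t0: "t0 \<in> I" "u t0 \<in> \<real>\<^sub>\<le>\<^sub>0" by blast
    have "norm (u t0) = 1" using u t0 by (auto simp: torus_iff split: if_splits)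
    moreover obtain r where "u t0 = of_real r" "r \<le> 0" using t0(2) nonpos_Reals_cases by blast
    ultimately have "Re (u t0) < 0" by auto
    define W where "W = {v :: nat \<Rightarrow> complex. Re (v t0) < 0}"
    have "open W"
      unfolding W_def using product_topology_basis'[of "{t0}" "\<lambda>_. {z. Re z < 0}" "\<lambda>_. t0"]
      by (simp add: open_halfspace_Re_lt)
    moreover have zero: "?F v = 0" if "v \<in> W" "v \<in> torus I" for v
      using cutoff_prod_torus_angle_eq_0[OF I K t0(1) that(2)] that(1) by (simp add: W_def w_def)
    moreover have "u \<in> W" using \<open>Re (u t0) < 0\<close> by (simp add: W_def)
    ultimately have "eventually (\<lambda>v. ?F v = 0) (at u within torus I)"
      unfolding eventually_at_topological by blast
    then have "(?F \<longlongrightarrow> 0) (at u within torus I)"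
      by (rule tendsto_eventually)
    moreover have "?F u = 0" using zero \<open>Re (u t0) < 0\<close> u by (simp add: W_def)
    ultimately show ?thesis unfolding continuous_within by metis
  qed
  then show ?thesis using continuous_on_eq_continuous_within by blast
qed

lemma torus_angle_torus_embed:
  assumes K: "K > 0" and box: "\<And>t. t \<in> I \<Longrightarrow> \<bar>x t\<bar> < 4 * K" and supp: "\<And>t. t \<notin> I \<Longrightarrow> x t = 0"
  shows "torus_angle (pi / (4 * K)) I (torus_embed (pi / (4 * K)) I x) = x"
proof
  fix t
  show "torus_angle (pi / (4 * K)) I (torus_embed (pi / (4 * K)) I x) t = x t"
  proof (cases "t \<in> I")
    case True
    define a where "a = pi / (4 * K) * x t"
    have "pi / (4 * K) * \<bar>x t\<bar> < pi / (4 * K) * (4 * K)"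
      using box[OF True] K by (intro mult_strict_left_mono) auto
    then have "\<bar>a\<bar> < pi"
      using K by (simp add: a_def abs_mult)
    then have "- pi < a" "a \<le> pi" by (auto simp: abs_less_iff)
    then have "Arg (iexp a) = a"
      using Arg_unique[of 1 a "iexp a"] by simp
    then show ?thesis using True K by (simp add: a_def torus_angle_def torus_embed_def)
  qed (simp add: torus_angle_def supp)
qed

lemma torus_lift_error:
  assumes I: "finite I" and K: "K > 0" and hb: "\<And>x. \<bar>h x\<bar> \<le> B"
    and supp: "\<And>t. t \<notin> I \<Longrightarrow> x t = 0"
  defines "w \<equiv> pi / (4 * K)"
  shows "\<bar>h x - h (torus_angle w I (torus_embed w I x)) * cutoff_prod I K (torus_angle w I (torus_embed w I x))\<bar>
           \<le> 2 * B * (1 - cutoff_prod I K x)"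
proof (cases "\<forall>t\<in>I. \<bar>x t\<bar> < 4 * K")
  case True
  then have "torus_angle w I (torus_embed w I x) = x"
    unfolding w_def using K supp by (intro torus_angle_torus_embed) auto
  moreover have "\<bar>h x\<bar> * (1 - cutoff_prod I K x) \<le> 2 * B * (1 - cutoff_prod I K x)"
    using hb[of x] cutoff_prod_bounds[OF I, of K x] by (intro mult_right_mono) auto
  moreover have "h x - h x * cutoff_prod I K x = h x * (1 - cutoff_prod I K x)"
    by (simp add: algebra_simps)
  then have "\<bar>h x - h x * cutoff_prod I K x\<bar> = \<bar>h x\<bar> * (1 - cutoff_prod I K x)"
    using cutoff_prod_bounds[OF I, of K x] by (simp add: abs_mult)
  ultimately show ?thesis by simp
next
  case False
  then obtain t where "t \<in> I" "\<bar>x t\<bar> \<ge> 4 * K" by auto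
  moreover from this have "cutoff (x t / K) = 0"
    using K by (intro cutoff_eq_0) (simp add: abs_divide field_simps)
  ultimately have "cutoff_prod I K x = 0" unfolding cutoff_prod_def using I by (intro prod_zero) auto
  moreover
  let ?y = "torus_angle w I (torus_embed w I x)"
  have "\<bar>h ?y * cutoff_prod I K ?y\<bar> \<le> B * 1"
    unfolding abs_mult using hb cutoff_prod_bounds[OF I] order_trans[OF abs_ge_zero hb[of x]]
    by (intro mult_mono) auto
  ultimately show ?thesis
    using hb[of x] abs_triangle_ineq4[of "h x" "h ?y * cutoff_prod I K ?y"] by simp
qed

lemma trig_poly_approx:
  assumes I: "finite I" and K: "K > 0" and e: "e > 0"
    and hc: "continuous_on UNIV h" and hb: "\<And>x. \<bar>h x\<bar> \<le> B"
  obtains q where "trig_poly I (\<lambda>x. complex_of_real (q x))"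
    and "\<And>x. (\<And>t. t \<notin> I \<Longrightarrow> x t = 0) \<Longrightarrow> \<bar>h x - q x\<bar> \<le> e + 2 * B * (\<Sum>t\<in>I. 1 - cutoff (x t / K))"
proof -
  define w where "w = pi / (4 * K)"
  define F where "F u = h (torus_angle w I u) * cutoff_prod I K (torus_angle w I u)" for u
  have "continuous_on (torus I) F"
    using continuous_on_torus_lift[OF I K hc] unfolding F_def w_def .
  then obtain p where p: "torus_poly p" "\<And>u. u \<in> torus I \<Longrightarrow> \<bar>F u - p u\<bar> < e"
    using torus_poly_dense e by blast
  show ?thesis
  proof (rule that[of "\<lambda>x. p (torus_embed w I x)"])
    show "trig_poly I (\<lambda>x. complex_of_real (p (torus_embed w I x)))"
      by (rule trig_poly_torus_poly[OF I p(1)])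
    fix x :: "nat \<Rightarrow> real" assume supp: "\<And>t. t \<notin> I \<Longrightarrow> x t = 0"
    have "0 \<le> B" using hb[of x] by linarith
    moreover have "1 - cutoff_prod I K x \<le> (\<Sum>t\<in>I. 1 - cutoff (x t / K))"
      unfolding cutoff_prod_def using I cutoff_nonneg cutoff_le_1 by (intro one_minus_prod_le_sum) auto
    ultimately have "2 * B * (1 - cutoff_prod I K x) \<le> 2 * B * (\<Sum>t\<in>I. 1 - cutoff (x t / K))"
      by (intro mult_left_mono) auto
    then have "\<bar>h x - F (torus_embed w I x)\<bar> \<le> 2 * B * (\<Sum>t\<in>I. 1 - cutoff (x t / K))"
      using torus_lift_error[of I K h B x, OF I K hb supp] unfolding F_def w_def by linarith
    moreover have "\<bar>F (torus_embed w I x) - p (torus_embed w I x)\<bar> < e"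
      using p(2) torus_embed_in_torus by blast
    ultimately show "\<bar>h x - p (torus_embed w I x)\<bar> \<le> e + 2 * B * (\<Sum>t\<in>I. 1 - cutoff (x t / K))"
      by linarith
  qed
qed

lemma coordinate_expectation_conv:
  fixes V :: "nat \<Rightarrow> 'a \<Rightarrow> nat \<Rightarrow> real" and G :: "'b \<Rightarrow> nat \<Rightarrow> real" and f :: "real \<Rightarrow> real"
  assumes M: "prob_space M" and P: "prob_space P" and I: "finite I" "t \<in> I"
    and V: "\<And>N. V N \<in> borel_measurable M" and G: "G \<in> borel_measurable P"
    and charfun: "\<And>c. (\<lambda>N. CLINT \<omega>|M. iexp (\<Sum>t\<in>I. c t * V N \<omega> t))
                      \<longlonglongrightarrow> (CLINT \<omega>|P. iexp (\<Sum>t\<in>I. c t * G \<omega> t))"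
    and f: "continuous_on UNIV f" "\<And>x. \<bar>f x\<bar> \<le> B"
  shows "(\<lambda>N. \<integral>\<omega>. f (V N \<omega> t) \<partial>M) \<longlonglongrightarrow> (\<integral>\<omega>. f (G \<omega> t) \<partial>P)"
proof -
  interpret M: prob_space M by fact
  interpret P: prob_space P by fact
  have [measurable]: "(\<lambda>\<omega>. V N \<omega> t) \<in> borel_measurable M" for N
    by (rule measurable_product_then_coordinatewise[OF V])
  have [measurable]: "(\<lambda>\<omega>. G \<omega> t) \<in> borel_measurable P"
    by (rule measurable_product_then_coordinatewise[OF G])
  have [measurable]: "f \<in> borel_measurable borel"
    by (rule borel_measurable_continuous_onI[OF f(1)])
  have V_distr: "real_distribution (distr M borel (\<lambda>\<omega>. V N \<omega> t))" for N by simp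
  have G_distr: "real_distribution (distr P borel (\<lambda>\<omega>. G \<omega> t))" by simp
  have char_V: "char (distr M borel (\<lambda>\<omega>. V N \<omega> t)) s = (CLINT \<omega>|M. iexp (\<Sum>t'\<in>I. (if t' = t then s else 0) * V N \<omega> t'))" for N s
    unfolding char_def sum_if_eq_mult[OF I] by (simp add: integral_distr)
  have char_G: "char (distr P borel (\<lambda>\<omega>. G \<omega> t)) s = (CLINT \<omega>|P. iexp (\<Sum>t'\<in>I. (if t' = t then s else 0) * G \<omega> t'))" for s
    unfolding char_def sum_if_eq_mult[OF I] by (simp add: integral_distr)
  have "weak_conv_m (\<lambda>N. distr M borel (\<lambda>\<omega>. V N \<omega> t)) (distr P borel (\<lambda>\<omega>. G \<omega> t))"
    by (rule levy_continuity[OF V_distr G_distr]) (simp only: char_V char_G charfun)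
  then have "(\<lambda>N. integral\<^sup>L (distr M borel (\<lambda>\<omega>. V N \<omega> t)) f) \<longlonglongrightarrow> integral\<^sup>L (distr P borel (\<lambda>\<omega>. G \<omega> t)) f"
    using f by (intro weak_conv_imp_integral_bdd_continuous_conv[OF V_distr G_distr, where B=B])
      (auto simp: continuous_on_eq_continuous_at)
  then show ?thesis by (simp add: integral_distr)
qed

lemma expectation_cutoff_tail_tendsto_0:
  assumes P: "prob_space P" and Y: "Y \<in> borel_measurable P"
  shows "(\<lambda>k. \<integral>\<omega>. 1 - cutoff (Y \<omega> / real (Suc k)) \<partial>P) \<longlonglongrightarrow> 0"
proof -
  interpret P: prob_space P by fact
  have "(\<lambda>k. 1 - cutoff (Y \<omega> / real (Suc k))) \<longlonglongrightarrow> 0" for \<omega>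
  proof (rule tendsto_eventually, rule eventually_sequentiallyI)
    fix k assume "nat \<lceil>\<bar>Y \<omega>\<bar>\<rceil> \<le> k"
    then have "\<bar>Y \<omega> / real (Suc k)\<bar> \<le> 1" by (simp add: abs_divide field_simps)
    then show "1 - cutoff (Y \<omega> / real (Suc k)) = 0" by (simp add: cutoff_eq_1)
  qed
  then have "(\<lambda>k. \<integral>\<omega>. 1 - cutoff (Y \<omega> / real (Suc k)) \<partial>P) \<longlonglongrightarrow> (\<integral>\<omega>. 0 \<partial>P)"
    using Y cutoff_nonneg cutoff_le_1
    by (intro integral_dominated_convergence[where w="\<lambda>_. 1"]) (auto simp: abs_le_iff)
  then show ?thesis by simp
qed

lemma expectation_trig_poly_approx:
  fixes W :: "'a \<Rightarrow> nat \<Rightarrow> real" and h q :: "(nat \<Rightarrow> real) \<Rightarrow> real"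
  assumes Q: "prob_space Q" and W: "W \<in> borel_measurable Q" and I: "finite I"
    and W_supp: "\<And>\<omega> t. t \<notin> I \<Longrightarrow> W \<omega> t = 0"
    and h: "continuous_on UNIV h" "\<And>x. \<bar>h x\<bar> \<le> B"
    and q: "trig_poly I (\<lambda>x. complex_of_real (q x))"
    and approx: "\<And>x. (\<And>t. t \<notin> I \<Longrightarrow> x t = 0) \<Longrightarrow> \<bar>h x - q x\<bar> \<le> e + 2 * B * (\<Sum>t\<in>I. 1 - cutoff (x t / K))"
  shows "\<bar>(\<integral>\<omega>. h (W \<omega>) \<partial>Q) - (\<integral>\<omega>. q (W \<omega>) \<partial>Q)\<bar>
           \<le> e + 2 * B * (\<Sum>t\<in>I. \<integral>\<omega>. 1 - cutoff (W \<omega> t / K) \<partial>Q)"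
proof (rule expectation_diff_bound[OF Q I])
  show "integrable Q (\<lambda>\<omega>. h (W \<omega>))"
    using h by (intro integrable_bounded_comp[OF Q W, where B=B] borel_measurable_continuous_onI) auto
  obtain Bq where "\<And>x. norm (complex_of_real (q x)) \<le> Bq" using trig_poly_bounded[OF q] by blast
  moreover have "continuous_on UNIV q" using continuous_on_Re[OF continuous_on_trig_poly[OF q]] by simp
  ultimately show "integrable Q (\<lambda>\<omega>. q (W \<omega>))"
    by (intro integrable_bounded_comp[OF Q W, where B=Bq] borel_measurable_continuous_onI) auto
  show "integrable Q (\<lambda>\<omega>. 1 - cutoff (W \<omega> t / K))" for t
    using cutoff_nonneg cutoff_le_1
    by (intro integrable_bounded_comp[OF Q W, where B=1] borel_measurable_continuous_onI
        continuous_on_diff continuous_on_const continuous_on_cutoff_comp continuous_on_component;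
        auto simp: abs_le_iff)
  show "\<bar>h (W \<omega>) - q (W \<omega>)\<bar> \<le> e + 2 * B * (\<Sum>t\<in>I. 1 - cutoff (W \<omega> t / K))" for \<omega>
    using approx W_supp by blast
qed

text \<open>Every bounded continuous function is uniformly approximated by trigonometric polynomials on a
  large box (Stone--Weierstrass on the torus), and the mass outside the box is controlled by the
  one-dimensional continuity theorem applied to each coordinate.\<close>
theorem charfun_conv_imp_expectation_conv:
  fixes V :: "nat \<Rightarrow> 'a \<Rightarrow> nat \<Rightarrow> real" and G :: "'b \<Rightarrow> nat \<Rightarrow> real" and h :: "(nat \<Rightarrow> real) \<Rightarrow> real"
  assumes M: "prob_space M" and P: "prob_space P" and I: "finite I"
    and V: "\<And>N. V N \<in> borel_measurable M" and G: "G \<in> borel_measurable P"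
    and V_supp: "\<And>N \<omega> t. t \<notin> I \<Longrightarrow> V N \<omega> t = 0" and G_supp: "\<And>\<omega> t. t \<notin> I \<Longrightarrow> G \<omega> t = 0"
    and charfun: "\<And>c. (\<lambda>N. CLINT \<omega>|M. iexp (\<Sum>t\<in>I. c t * V N \<omega> t))
                      \<longlonglongrightarrow> (CLINT \<omega>|P. iexp (\<Sum>t\<in>I. c t * G \<omega> t))"
    and h: "continuous_on UNIV h" "\<And>x. \<bar>h x\<bar> \<le> B"
  shows "(\<lambda>N. \<integral>\<omega>. h (V N \<omega>) \<partial>M) \<longlonglongrightarrow> (\<integral>\<omega>. h (G \<omega>) \<partial>P)"
proof -
  define e where "e k = 1 / real (Suc k)" for k
  define tail where "tail k x = (\<Sum>t\<in>I. 1 - cutoff (x t / real (Suc k)))" for k x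
  have "\<exists>q. trig_poly I (\<lambda>x. complex_of_real (q x)) \<and>
          (\<forall>x. (\<forall>t. t \<notin> I \<longrightarrow> x t = 0) \<longrightarrow> \<bar>h x - q x\<bar> \<le> e k + 2 * B * tail k x)" for k
  proof -
    obtain q where "trig_poly I (\<lambda>x. complex_of_real (q x))"
      "\<And>x. (\<And>t. t \<notin> I \<Longrightarrow> x t = 0) \<Longrightarrow> \<bar>h x - q x\<bar> \<le> e k + 2 * B * tail k x"
      unfolding tail_def by (rule trig_poly_approx[OF I _ _ h, where K="real (Suc k)" and e="e k"]) (simp_all add: e_def)
    then show ?thesis by blast
  qed
  then obtain q where q: "\<And>k. trig_poly I (\<lambda>x. complex_of_real (q k x))"
    and approx: "\<And>k x. (\<And>t. t \<notin> I \<Longrightarrow> x t = 0) \<Longrightarrow> \<bar>h x - q k x\<bar> \<le> e k + 2 * B * tail k x"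
    by metis
  have tail_cont: "continuous_on UNIV (\<lambda>a. 1 - cutoff (a / real (Suc k)))" for k
    by (intro continuous_intros continuous_on_cutoff_comp)
  show ?thesis
  proof (rule LIMSEQ_by_approximation[where b="\<lambda>k N. \<integral>\<omega>. q k (V N \<omega>) \<partial>M" and b'="\<lambda>k. \<integral>\<omega>. q k (G \<omega>) \<partial>P"
        and c="\<lambda>k N. e k + 2 * B * (\<Sum>t\<in>I. \<integral>\<omega>. 1 - cutoff (V N \<omega> t / real (Suc k)) \<partial>M)"
        and c'="\<lambda>k. e k + 2 * B * (\<Sum>t\<in>I. \<integral>\<omega>. 1 - cutoff (G \<omega> t / real (Suc k)) \<partial>P)"])
    show "(\<lambda>N. \<integral>\<omega>. q k (V N \<omega>) \<partial>M) \<longlonglongrightarrow> (\<integral>\<omega>. q k (G \<omega>) \<partial>P)" for k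
      using trig_poly_expectation_conv[OF M P V G charfun q] by (simp add: tendsto_of_real_iff)
    show "(\<lambda>N. e k + 2 * B * (\<Sum>t\<in>I. \<integral>\<omega>. 1 - cutoff (V N \<omega> t / real (Suc k)) \<partial>M))
          \<longlonglongrightarrow> e k + 2 * B * (\<Sum>t\<in>I. \<integral>\<omega>. 1 - cutoff (G \<omega> t / real (Suc k)) \<partial>P)" for k
      using cutoff_nonneg cutoff_le_1
      by (intro tendsto_add tendsto_const tendsto_mult_left tendsto_sum
          coordinate_expectation_conv[OF M P I _ V G charfun tail_cont, where B=1]) (auto simp: abs_le_iff)
    show "\<bar>(\<integral>\<omega>. h (V N \<omega>) \<partial>M) - (\<integral>\<omega>. q k (V N \<omega>) \<partial>M)\<bar>
          \<le> e k + 2 * B * (\<Sum>t\<in>I. \<integral>\<omega>. 1 - cutoff (V N \<omega> t / real (Suc k)) \<partial>M)" for k N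
      by (rule expectation_trig_poly_approx[OF M V I V_supp h q approx[unfolded tail_def]])
    show "\<bar>(\<integral>\<omega>. h (G \<omega>) \<partial>P) - (\<integral>\<omega>. q k (G \<omega>) \<partial>P)\<bar>
          \<le> e k + 2 * B * (\<Sum>t\<in>I. \<integral>\<omega>. 1 - cutoff (G \<omega> t / real (Suc k)) \<partial>P)" for k
      by (rule expectation_trig_poly_approx[OF P G I G_supp h q approx[unfolded tail_def]])
    have "e \<longlonglongrightarrow> 0"
      unfolding e_def using LIMSEQ_Suc[OF lim_1_over_n] by simp
    then show "(\<lambda>k. e k + 2 * B * (\<Sum>t\<in>I. \<integral>\<omega>. 1 - cutoff (G \<omega> t / real (Suc k)) \<partial>P)) \<longlonglongrightarrow> 0"
      using tendsto_add[OF _ tendsto_mult_left[OF tendsto_sum[OF expectation_cutoff_tail_tendsto_0[OF P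
            measurable_product_then_coordinatewise[OF G]]]]]
      by fastforce
  qed
qed

lemma weak_conv_distr_compI:
  fixes V :: "nat \<Rightarrow> 'a \<Rightarrow> 'c::topological_space" and G :: "'b \<Rightarrow> 'c" and g :: "'c \<Rightarrow> real"
  assumes M: "prob_space M" and P: "prob_space P"
    and V: "\<And>N. V N \<in> borel_measurable M" and G: "G \<in> borel_measurable P"
    and g: "g \<in> borel_measurable borel"
    and conv: "\<And>f :: real \<Rightarrow> real. continuous_on UNIV f \<Longrightarrow> (\<And>x. \<bar>f x\<bar> \<le> 1) \<Longrightarrow>
                 (\<lambda>N. \<integral>\<omega>. f (g (V N \<omega>)) \<partial>M) \<longlonglongrightarrow> (\<integral>\<omega>. f (g (G \<omega>)) \<partial>P)"
  shows "weak_conv_m (\<lambda>N. distr M borel (\<lambda>\<omega>. g (V N \<omega>))) (distr P borel (\<lambda>\<omega>. g (G \<omega>)))"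
proof (rule integral_bdd_continuous_conv_imp_weak_conv)
  interpret M: prob_space M by fact
  interpret P: prob_space P by fact
  have [measurable]: "(\<lambda>\<omega>. g (V N \<omega>)) \<in> borel_measurable M" "(\<lambda>\<omega>. g (G \<omega>)) \<in> borel_measurable P" for N
    using measurable_compose[OF V g] measurable_compose[OF G g] by auto
  show "real_distribution (distr M borel (\<lambda>\<omega>. g (V N \<omega>)))" for N by simp
  show "real_distribution (distr P borel (\<lambda>\<omega>. g (G \<omega>)))" by simp
  fix f :: "real \<Rightarrow> real" assume f: "\<And>x. isCont f x" "\<And>x. \<bar>f x\<bar> \<le> 1"
  have f_cont: "continuous_on UNIV f"
    using f(1) by (intro continuous_at_imp_continuous_on) auto
  have "(\<lambda>N. \<integral>\<omega>. f (g (V N \<omega>)) \<partial>M) \<longlonglongrightarrow> (\<integral>\<omega>. f (g (G \<omega>)) \<partial>P)"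
    by (rule conv[OF f_cont f(2)])
  then show "(\<lambda>N. integral\<^sup>L (distr M borel (\<lambda>\<omega>. g (V N \<omega>))) f) \<longlonglongrightarrow> integral\<^sup>L (distr P borel (\<lambda>\<omega>. g (G \<omega>))) f"
    using borel_measurable_continuous_onI[OF f_cont] by (simp add: integral_distr)
qed

lemma expectation_cutoff_shrink_tendsto_0:
  assumes P: "prob_space P" and Z: "Z \<in> borel_measurable P" and pos: "AE \<omega> in P. Z \<omega> > 0"
  shows "(\<lambda>k. \<integral>\<omega>. cutoff (Z \<omega> / (1 / real (Suc k))) \<partial>P) \<longlonglongrightarrow> 0"
proof -
  interpret P: prob_space P by fact
  have "AE \<omega> in P. (\<lambda>k. cutoff (Z \<omega> / (1 / real (Suc k)))) \<longlonglongrightarrow> 0"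
    using pos
  proof eventually_elim
    case (elim \<omega>)
    show ?case
    proof (rule tendsto_eventually, rule eventually_sequentiallyI)
      fix k assume "nat \<lceil>2 / Z \<omega>\<rceil> \<le> k"
      then have "2 \<le> Z \<omega> * real (Suc k)" using elim by (simp add: field_simps)
      then show "cutoff (Z \<omega> / (1 / real (Suc k))) = 0" using elim by (intro cutoff_eq_0) simp
    qed
  qed
  then have "(\<lambda>k. \<integral>\<omega>. cutoff (Z \<omega> / (1 / real (Suc k))) \<partial>P) \<longlonglongrightarrow> (\<integral>\<omega>. 0 \<partial>P)"
    using Z by (intro integral_dominated_convergence[where w="\<lambda>_. 1"]) (auto simp: abs_cutoff_le_1)
  then show ?thesis by simp
qed

lemma truncation_error_le:
  fixes h g :: "'c \<Rightarrow> real" and D :: "'i \<Rightarrow> 'c \<Rightarrow> real"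
  assumes A: "finite A" and D_nonneg: "\<And>t. t \<in> A \<Longrightarrow> 0 \<le> D t x" and d: "d > 0"
    and bounded: "\<bar>h x\<bar> \<le> 1" "\<bar>g x\<bar> \<le> 1" and eq: "(\<forall>t\<in>A. d \<le> D t x) \<Longrightarrow> g x = h x"
  shows "\<bar>h x - g x\<bar> \<le> 2 * (\<Sum>t\<in>A. cutoff (D t x / d))"
proof (cases "\<forall>t\<in>A. d \<le> D t x")
  case True
  then show ?thesis using cutoff_nonneg by (simp add: eq sum_nonneg)
next
  case False
  then obtain t where t: "t \<in> A" "D t x < d" by auto
  then have "cutoff (D t x / d) = 1"
    using D_nonneg[of t] d by (intro cutoff_eq_1) (simp add: abs_divide)
  then have "1 \<le> (\<Sum>t\<in>A. cutoff (D t x / d))"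
    using t A cutoff_nonneg by (metis member_le_sum)
  then show ?thesis using bounded by linarith
qed

lemma expectation_truncation_error_le:
  fixes W :: "'a \<Rightarrow> 'c::topological_space" and h g :: "'c \<Rightarrow> real" and D :: "'i \<Rightarrow> 'c \<Rightarrow> real"
  assumes Q: "prob_space Q" "W \<in> borel_measurable Q"
    and A: "finite A" and D: "\<And>t. t \<in> A \<Longrightarrow> continuous_on UNIV (D t)"
    and D_nonneg: "\<And>t x. t \<in> A \<Longrightarrow> 0 \<le> D t x" and d: "d > 0"
    and h: "h \<in> borel_measurable borel" "\<And>x. \<bar>h x\<bar> \<le> 1"
    and g: "continuous_on UNIV g" "\<And>x. \<bar>g x\<bar> \<le> 1"
    and eq: "\<And>x. (\<forall>t\<in>A. d \<le> D t x) \<Longrightarrow> g x = h x"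
  shows "\<bar>(\<integral>\<omega>. h (W \<omega>) \<partial>Q) - (\<integral>\<omega>. g (W \<omega>) \<partial>Q)\<bar> \<le> 2 * (\<Sum>t\<in>A. \<integral>\<omega>. cutoff (D t (W \<omega>) / d) \<partial>Q)"
proof -
  have integrable: "integrable Q (\<lambda>\<omega>. f (W \<omega>))"
    if "f \<in> borel_measurable borel" "\<And>x. \<bar>f x\<bar> \<le> 1" for f :: "'c \<Rightarrow> real"
    using Q that by (intro integrable_bounded_comp[where B=1]) auto
  have "\<bar>(\<integral>\<omega>. h (W \<omega>) \<partial>Q) - (\<integral>\<omega>. g (W \<omega>) \<partial>Q)\<bar> \<le> 0 + 2 * (\<Sum>t\<in>A. \<integral>\<omega>. cutoff (D t (W \<omega>) / d) \<partial>Q)"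
  proof (rule expectation_diff_bound[OF Q(1) A])
    show "integrable Q (\<lambda>\<omega>. h (W \<omega>))" "integrable Q (\<lambda>\<omega>. g (W \<omega>))"
      using h g by (auto intro: integrable borel_measurable_continuous_onI)
    show "integrable Q (\<lambda>\<omega>. cutoff (D t (W \<omega>) / d))" if "t \<in> A" for t
      using D[OF that] abs_cutoff_le_1
      by (intro integrable borel_measurable_continuous_onI continuous_on_cutoff_comp)
    show "\<bar>h (W \<omega>) - g (W \<omega>)\<bar> \<le> 0 + 2 * (\<Sum>t\<in>A. cutoff (D t (W \<omega>) / d))" for \<omega>
    proof -
      have "\<bar>h (W \<omega>) - g (W \<omega>)\<bar> \<le> 2 * (\<Sum>t\<in>A. cutoff (D t (W \<omega>) / d))"
        using A d h(2) g(2) eq D_nonneg by (intro truncation_error_le[where x="W \<omega>"])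
      then show ?thesis by simp
    qed
  qed
  then show ?thesis by simp
qed

text \<open>A continuous mapping theorem for functions \<open>h\<close> that are continuous off the zero set of the
  \<open>D t\<close>, which the limit avoids almost surely; continuity is expressed through continuous
  truncations of \<open>h\<close> that agree with \<open>h\<close> wherever all \<open>D t\<close> are at least \<open>d\<close>.\<close>
lemma expectation_conv_off_zero_set:
  fixes V :: "nat \<Rightarrow> 'a \<Rightarrow> 'c::topological_space" and G :: "'b \<Rightarrow> 'c"
    and h :: "'c \<Rightarrow> real" and D :: "'i \<Rightarrow> 'c \<Rightarrow> real"
  assumes M: "prob_space M" and P: "prob_space P"
    and V: "\<And>N. V N \<in> borel_measurable M" and G: "G \<in> borel_measurable P"
    and conv: "\<And>g :: 'c \<Rightarrow> real. continuous_on UNIV g \<Longrightarrow> (\<And>x. \<bar>g x\<bar> \<le> 1) \<Longrightarrow>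
                 (\<lambda>N. \<integral>\<omega>. g (V N \<omega>) \<partial>M) \<longlonglongrightarrow> (\<integral>\<omega>. g (G \<omega>) \<partial>P)"
    and A: "finite A" and D: "\<And>t. t \<in> A \<Longrightarrow> continuous_on UNIV (D t)"
    and D_nonneg: "\<And>t x. t \<in> A \<Longrightarrow> 0 \<le> D t x"
    and h: "h \<in> borel_measurable borel" "\<And>x. \<bar>h x\<bar> \<le> 1"
    and trunc: "\<And>d. d > 0 \<Longrightarrow> \<exists>g. continuous_on UNIV g \<and> (\<forall>x. \<bar>g x\<bar> \<le> 1) \<and>
                                    (\<forall>x. (\<forall>t\<in>A. d \<le> D t x) \<longrightarrow> g x = h x)"
    and pos: "AE \<omega> in P. \<forall>t\<in>A. 0 < D t (G \<omega>)"
  shows "(\<lambda>N. \<integral>\<omega>. h (V N \<omega>) \<partial>M) \<longlonglongrightarrow> (\<integral>\<omega>. h (G \<omega>) \<partial>P)"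
proof -
  define d where "d k = 1 / real (Suc k)" for k
  have d: "d k > 0" for k by (simp add: d_def)
  obtain g where g: "\<And>k. continuous_on UNIV (g k)" "\<And>k x. \<bar>g k x\<bar> \<le> 1"
    and g_eq: "\<And>k x. (\<forall>t\<in>A. d k \<le> D t x) \<Longrightarrow> g k x = h x"
    using trunc[OF d] by metis
  have error: "\<bar>(\<integral>\<omega>. h (W \<omega>) \<partial>Q) - (\<integral>\<omega>. g k (W \<omega>) \<partial>Q)\<bar>
      \<le> 2 * (\<Sum>t\<in>A. \<integral>\<omega>. cutoff (D t (W \<omega>) / d k) \<partial>Q)"
    if "prob_space Q" "W \<in> borel_measurable Q" for Q W k
    using g g_eq by (intro expectation_truncation_error_le[OF that A D D_nonneg d h]) auto
  show ?thesis
  proof (rule LIMSEQ_by_approximation[where b="\<lambda>k N. \<integral>\<omega>. g k (V N \<omega>) \<partial>M"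
        and b'="\<lambda>k. \<integral>\<omega>. g k (G \<omega>) \<partial>P"
        and c="\<lambda>k N. 2 * (\<Sum>t\<in>A. \<integral>\<omega>. cutoff (D t (V N \<omega>) / d k) \<partial>M)"
        and c'="\<lambda>k. 2 * (\<Sum>t\<in>A. \<integral>\<omega>. cutoff (D t (G \<omega>) / d k) \<partial>P)"])
    show "(\<lambda>N. \<integral>\<omega>. g k (V N \<omega>) \<partial>M) \<longlonglongrightarrow> (\<integral>\<omega>. g k (G \<omega>) \<partial>P)" for k
      using g by (rule conv)
    show "(\<lambda>N. 2 * (\<Sum>t\<in>A. \<integral>\<omega>. cutoff (D t (V N \<omega>) / d k) \<partial>M))
          \<longlonglongrightarrow> 2 * (\<Sum>t\<in>A. \<integral>\<omega>. cutoff (D t (G \<omega>) / d k) \<partial>P)" for k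
      using D abs_cutoff_le_1 by (intro tendsto_intros conv continuous_on_cutoff_comp) auto
    show "\<bar>(\<integral>\<omega>. h (V N \<omega>) \<partial>M) - (\<integral>\<omega>. g k (V N \<omega>) \<partial>M)\<bar>
          \<le> 2 * (\<Sum>t\<in>A. \<integral>\<omega>. cutoff (D t (V N \<omega>) / d k) \<partial>M)" for k N
      by (rule error[OF M V])
    show "\<bar>(\<integral>\<omega>. h (G \<omega>) \<partial>P) - (\<integral>\<omega>. g k (G \<omega>) \<partial>P)\<bar>
          \<le> 2 * (\<Sum>t\<in>A. \<integral>\<omega>. cutoff (D t (G \<omega>) / d k) \<partial>P)" for k
      by (rule error[OF P G])
    have tail: "(\<lambda>k. \<integral>\<omega>. cutoff (D t (G \<omega>) / d k) \<partial>P) \<longlonglongrightarrow> 0" if t: "t \<in> A" for t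
      unfolding d_def
    proof (rule expectation_cutoff_shrink_tendsto_0[OF P])
      show "(\<lambda>\<omega>. D t (G \<omega>)) \<in> borel_measurable P"
        using G borel_measurable_continuous_onI[OF D[OF t]] by (rule measurable_compose)
      show "AE \<omega> in P. 0 < D t (G \<omega>)" using pos t by auto
    qed
    show "(\<lambda>k. 2 * (\<Sum>t\<in>A. \<integral>\<omega>. cutoff (D t (G \<omega>) / d k) \<partial>P)) \<longlonglongrightarrow> 0"
      using tendsto_mult_left[OF tendsto_null_sum[OF tail], where c=2] by simp
  qed
qed

section \<open>The covariance matrix\<close>

lemma cumr_eq_sum:
  "cumr rho t = real t * rho 0 + 2 * (\<Sum>k\<in>{1..<t}. (real t - real k) * rho k)"
proof (cases "t = 0")
  case False
  have "{- int t + 1..int t - 1} = int ` {1..<t} \<union> ({0} \<union> uminus ` int ` {1..<t})"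
  proof (intro set_eqI iffI)
    fix x assume x: "x \<in> {- int t + 1..int t - 1}"
    consider "x > 0" | "x = 0" | "x < 0" by linarith
    then show "x \<in> int ` {1..<t} \<union> ({0} \<union> uminus ` int ` {1..<t})"
    proof cases
      case 1
      then have "x = int (nat x)" "nat x \<in> {1..<t}" using x by auto
      then show ?thesis by blast
    next
      case 3
      then have "x = - int (nat (- x))" "nat (- x) \<in> {1..<t}" using x by auto
      then show ?thesis by blast
    qed simp
  qed (use False in auto)
  moreover have "int ` {1..<t} \<inter> ({0} \<union> uminus ` int ` {1..<t}) = {}" "{0} \<inter> uminus ` int ` {1..<t} = {}"
    by auto
  ultimately show ?thesis
    unfolding cumr_def
    by (simp add: sum.union_disjoint sum.reindex inj_on_def image_image)
qed (simp add: cumr_def)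

definition lag :: "nat \<Rightarrow> nat \<Rightarrow> nat" where
  "lag s u = (if s \<le> u then u - s else s - u)"

definition lag_sum :: "(nat \<Rightarrow> real) \<Rightarrow> nat \<Rightarrow> nat \<Rightarrow> real" where
  "lag_sum rho t v = (\<Sum>s\<in>{1..t}. \<Sum>u\<in>{1..v}. rho (lag s u))"

lemma lag_commute: "lag s u = lag u s"
  by (simp add: lag_def)

lemma lag_sum_commute: "lag_sum rho t v = lag_sum rho v t"
  unfolding lag_sum_def by (subst sum.swap) (simp only: lag_commute)

lemma lag_sum_diag: "lag_sum rho t t = cumr rho t"
proof (induction t)
  case (Suc t)
  have rev: "(\<Sum>s\<in>{1..t}. rho (Suc t - s)) = (\<Sum>k\<in>{1..t}. rho k)"
    by (rule sum.reindex_bij_witness[where i="\<lambda>k. Suc t - k" and j="\<lambda>k. Suc t - k"]) auto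
  have "lag_sum rho (Suc t) (Suc t) = lag_sum rho t t + 2 * (\<Sum>s\<in>{1..t}. rho (Suc t - s)) + rho 0"
    unfolding lag_sum_def by (simp add: sum.distrib lag_def)
  also note rev
  also have "(\<Sum>k\<in>{1..t}. rho k) = (\<Sum>k\<in>{1..<Suc t}. (real (Suc t) - real k) * rho k)
      - (\<Sum>k\<in>{1..<t}. (real t - real k) * rho k)"
  proof -
    have "(\<Sum>k\<in>{1..<t}. (real t - real k) * rho k) = (\<Sum>k\<in>{1..t}. (real t - real k) * rho k)"
      by (cases t) (simp_all add: atLeastLessThanSuc_atLeastAtMost)
    moreover have "(\<Sum>k\<in>{1..<Suc t}. (real (Suc t) - real k) * rho k)
        = (\<Sum>k\<in>{1..t}. (real t - real k) * rho k) + (\<Sum>k\<in>{1..t}. rho k)"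
      by (simp add: atLeastLessThanSuc_atLeastAtMost sum.distrib[symmetric] algebra_simps)
    ultimately show ?thesis by simp
  qed
  finally show ?case using Suc.IH by (simp add: cumr_eq_sum algebra_simps)
qed (simp add: lag_sum_def cumr_def)

lemma Lam_eq_lag_sum: "Lam rho t v = lag_sum rho t v"
proof -
  have "lag_sum rho t v = cumr rho t + shiftR rho t v" if "t \<le> v" for t v
  proof -
    have "{1..v} = {1..t} \<union> {t+1..v}" using that by auto
    then have "lag_sum rho t v = lag_sum rho t t + (\<Sum>s\<in>{1..t}. \<Sum>u\<in>{t+1..v}. rho (lag s u))"
      unfolding lag_sum_def by (simp add: sum.union_disjoint sum.distrib)
    then show ?thesis by (simp add: lag_sum_diag shiftR_def lag_def)
  qed
  then show ?thesis
    unfolding Lam_def using lag_sum_commute[of rho t v] by (auto simp: lag_sum_diag)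
qed

section \<open>Linear combinations of a centred Gaussian vector\<close>

lemma borel_measurable_lin_comb_centered_mvnormal:
  "centered_mvnormal P X T L \<Longrightarrow> (\<lambda>\<omega>. \<Sum>t\<in>{1..T}. c t * X t \<omega>) \<in> borel_measurable P"
  unfolding centered_mvnormal_def by (intro borel_measurable_sum borel_measurable_times) auto

lemma char_lin_comb_centered_mvnormal:
  assumes "centered_mvnormal P X T L"
  shows "char (distr P borel (\<lambda>\<omega>. \<Sum>t\<in>{1..T}. c t * X t \<omega>)) s =
         complex_of_real (exp (- (s\<^sup>2 * (\<Sum>t\<in>{1..T}. \<Sum>v\<in>{1..T}. c t * c v * L t v)) / 2))"
proof -
  have "prob_space P" and [measurable]: "\<And>t. t \<in> {1..T} \<Longrightarrow> X t \<in> borel_measurable P"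
    and charfun: "\<And>c. (CLINT \<omega>|P. iexp (\<Sum>t\<in>{1..T}. c t * X t \<omega>)) =
       complex_of_real (exp (- (\<Sum>t\<in>{1..T}. \<Sum>v\<in>{1..T}. c t * c v * L t v) / 2))"
    using assms unfolding centered_mvnormal_def by auto
  have "char (distr P borel (\<lambda>\<omega>. \<Sum>t\<in>{1..T}. c t * X t \<omega>)) s
      = (CLINT \<omega>|P. iexp (\<Sum>t\<in>{1..T}. (s * c t) * X t \<omega>))"
    unfolding char_def by (subst integral_distr) (auto simp: sum_distrib_left mult.assoc)
  also have "\<dots> = complex_of_real (exp (- (\<Sum>t\<in>{1..T}. \<Sum>v\<in>{1..T}. (s * c t) * (s * c v) * L t v) / 2))"
    by (rule charfun)
  also have "(\<Sum>t\<in>{1..T}. \<Sum>v\<in>{1..T}. (s * c t) * (s * c v) * L t v) =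
      s\<^sup>2 * (\<Sum>t\<in>{1..T}. \<Sum>v\<in>{1..T}. c t * c v * L t v)"
    by (simp add: sum_distrib_left power2_eq_square algebra_simps)
  finally show ?thesis .
qed

lemma centered_mvnormal_lin_comb_AE_eq_0:
  assumes "centered_mvnormal P X T L" "(\<Sum>t\<in>{1..T}. \<Sum>v\<in>{1..T}. c t * c v * L t v) = 0"
  shows "AE \<omega> in P. (\<Sum>t\<in>{1..T}. c t * X t \<omega>) = 0"
proof -
  interpret P: prob_space P using assms(1) unfolding centered_mvnormal_def by blast
  note Y = borel_measurable_lin_comb_centered_mvnormal[OF assms(1)]
  have "char (distr P borel (\<lambda>\<omega>. \<Sum>t\<in>{1..T}. c t * X t \<omega>)) s = 1" for s
    using char_lin_comb_centered_mvnormal[OF assms(1), of c s] assms(2) by simp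
  moreover have "char (return borel 0) s = 1" for s
    by (simp add: char_def integral_return)
  ultimately have "char (distr P borel (\<lambda>\<omega>. \<Sum>t\<in>{1..T}. c t * X t \<omega>)) = char (return borel 0)"
    by (intro ext) simp
  then have distr_eq: "distr P borel (\<lambda>\<omega>. \<Sum>t\<in>{1..T}. c t * X t \<omega>) = return borel 0"
    by (rule Levy_uniqueness[rotated 2, OF _ P.real_distribution_distr[OF Y]])
      (simp add: real_distribution_def real_distribution_axioms_def prob_space_return)
  have "AE y in distr P borel (\<lambda>\<omega>. \<Sum>t\<in>{1..T}. c t * X t \<omega>). y = 0"
    unfolding distr_eq by (subst AE_return) auto
  then show ?thesis by (simp add: AE_distr_iff[OF Y] del: One_nat_def)
qed

lemma centered_mvnormal_lin_comb_AE_neq_0: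
  assumes "centered_mvnormal P X T L" "(\<Sum>t\<in>{1..T}. \<Sum>v\<in>{1..T}. c t * c v * L t v) > 0"
  shows "AE \<omega> in P. (\<Sum>t\<in>{1..T}. c t * X t \<omega>) \<noteq> 0"
proof -
  interpret P: prob_space P using assms(1) unfolding centered_mvnormal_def by blast
  interpret N: real_distribution std_normal_distribution by (rule real_dist_normal_dist)
  note Y = borel_measurable_lin_comb_centered_mvnormal[OF assms(1)]
  define \<sigma> where "\<sigma> = sqrt (\<Sum>t\<in>{1..T}. \<Sum>v\<in>{1..T}. c t * c v * L t v)"
  have \<sigma>: "\<sigma> > 0" "\<sigma>\<^sup>2 = (\<Sum>t\<in>{1..T}. \<Sum>v\<in>{1..T}. c t * c v * L t v)"
    using assms(2) by (auto simp: \<sigma>_def)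
  have "char (distr std_normal_distribution borel (\<lambda>x. \<sigma> * x)) s = char std_normal_distribution (s * \<sigma>)" for s
    unfolding char_def by (subst integral_distr) (auto simp: mult.assoc)
  then have "char (distr P borel (\<lambda>\<omega>. \<Sum>t\<in>{1..T}. c t * X t \<omega>)) =
      char (distr std_normal_distribution borel (\<lambda>x. \<sigma> * x))"
    using char_lin_comb_centered_mvnormal[OF assms(1)] \<sigma>(2)
    by (intro ext) (simp add: char_std_normal_distribution power_mult_distrib mult.commute)
  then have distr_eq: "distr P borel (\<lambda>\<omega>. \<Sum>t\<in>{1..T}. c t * X t \<omega>) =
      distr std_normal_distribution borel (\<lambda>x. \<sigma> * x)"
    by (rule Levy_uniqueness[rotated 2, OF _ P.real_distribution_distr[OF Y]]) simp
  have density: "(\<lambda>x. ennreal (std_normal_density x)) \<in> borel_measurable lborel"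
    by simp
  have "AE x in std_normal_distribution. x \<noteq> 0"
    unfolding AE_density[OF density] using AE_lborel_singleton[of 0] by eventually_elim auto
  then have "AE y in distr P borel (\<lambda>\<omega>. \<Sum>t\<in>{1..T}. c t * X t \<omega>). y \<noteq> 0"
    unfolding distr_eq using \<sigma>(1) by (simp add: AE_distr_iff)
  then show ?thesis by (simp add: AE_distr_iff[OF Y] del: One_nat_def)
qed

section \<open>The statistics as functions of the partial-sum vector\<close>

lemma continuous_on_Max_image:
  assumes "finite S" "S \<noteq> {}" "\<And>s. s \<in> S \<Longrightarrow> continuous_on U (g s)"
  shows "continuous_on U (\<lambda>x. Max ((\<lambda>s. g s x) ` S) :: real)"
  using assms
proof (induction S rule: finite_ne_induct)
  case (insert s F)
  then have "continuous_on U (\<lambda>x. max (g s x) (Max ((\<lambda>s. g s x) ` F)))"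
    by (intro continuous_on_max) auto
  with insert show ?case by (simp add: Max_insert)
qed simp

lemma Max_image_abs_nonneg: "finite A \<Longrightarrow> A \<noteq> {} \<Longrightarrow> 0 \<le> Max ((\<lambda>s. \<bar>f s :: real\<bar>) ` A)"
  by (subst Max_ge_iff) auto

lemma Max_image_const_mult:
  assumes "(c::real) \<ge> 0" "finite A" "A \<noteq> {}"
  shows "Max ((\<lambda>x. c * f x) ` A) = c * Max (f ` A)"
proof -
  have "mono ((*) c)" using assms(1) by (auto intro: monoI mult_left_mono)
  then show ?thesis using assms by (simp add: mono_Max_commute image_image)
qed

lemma Max_image_eq_0:
  "finite A \<Longrightarrow> A \<noteq> {} \<Longrightarrow> (\<And>s. s \<in> A \<Longrightarrow> f s = (0::real)) \<Longrightarrow> Max (f ` A) = 0"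
proof -
  assume "finite A" "A \<noteq> {}" "\<And>s. s \<in> A \<Longrightarrow> f s = 0"
  then have "f ` A = {0}" by auto
  then show ?thesis by simp
qed

definition coord_vec :: "nat \<Rightarrow> (nat \<Rightarrow> 'b \<Rightarrow> real) \<Rightarrow> 'b \<Rightarrow> nat \<Rightarrow> real" where
  "coord_vec T X \<omega> = (\<lambda>t. if t \<in> {1..T} then X t \<omega> else 0)"

lemma borel_measurable_coord_vec:
  assumes "\<And>t. t \<in> {1..T} \<Longrightarrow> X t \<in> borel_measurable P"
  shows "coord_vec T X \<in> borel_measurable P"
proof (rule measurable_coordinatewise_then_product)
  fix t
  show "(\<lambda>\<omega>. coord_vec T X \<omega> t) \<in> borel_measurable P"
  proof (cases "t \<in> {1..T}")
    case True
    then show ?thesis using assms by (simp add: coord_vec_def)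
  next
    case False
    then have "(\<lambda>\<omega>. coord_vec T X \<omega> t) = (\<lambda>_. 0)" by (force simp: coord_vec_def)
    then show ?thesis by simp
  qed
qed

definition cusum_max :: "nat \<Rightarrow> real \<Rightarrow> (nat \<Rightarrow> real) \<Rightarrow> real" where
  "cusum_max T sig x = sig * Max ((\<lambda>t. \<bar>x t - real t / real T * x T\<bar>) ` {1..T-1})"

definition ratio_num :: "nat \<Rightarrow> (nat \<Rightarrow> real) \<Rightarrow> real" where
  "ratio_num t x = Max ((\<lambda>s. \<bar>x s - real s / real t * x t\<bar>) ` {1..t})"

definition ratio_den :: "nat \<Rightarrow> nat \<Rightarrow> (nat \<Rightarrow> real) \<Rightarrow> real" where
  "ratio_den T t x =
     Max ((\<lambda>s. \<bar>(x T - x s) - (real T - real s) / (real T - real t) * (x T - x t)\<bar>) ` {t..T-1})"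

definition ratio_max :: "nat \<Rightarrow> (nat \<Rightarrow> real) \<Rightarrow> real" where
  "ratio_max T x = Max ((\<lambda>t. ratio_num t x / ratio_den T t x) ` {2..T-2})"

definition ratio_max_trunc :: "nat \<Rightarrow> real \<Rightarrow> (nat \<Rightarrow> real) \<Rightarrow> real" where
  "ratio_max_trunc T d x = Max ((\<lambda>t. ratio_num t x / max d (ratio_den T t x)) ` {2..T-2})"

lemma limC_eq_cusum_max: "T \<ge> 2 \<Longrightarrow> limC T sig X \<omega> = cusum_max T sig (coord_vec T X \<omega>)"
  unfolding limC_def cusum_max_def coord_vec_def
  by (intro arg_cong[where f="\<lambda>m. sig * m"] arg_cong[where f=Max] image_cong refl) auto

lemma limR_eq_ratio_max: "T \<ge> 4 \<Longrightarrow> limR T X \<omega> = ratio_max T (coord_vec T X \<omega>)"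
  unfolding limR_def ratio_max_def ratio_num_def ratio_den_def coord_vec_def Let_def
  by (intro arg_cong[where f=Max] image_cong refl arg_cong2[where f="(/)"]) auto

lemma continuous_on_abs_lin_comb:
  "continuous_on UNIV (\<lambda>x::nat \<Rightarrow> real. \<bar>(x a - x s) - k * (x a - x t)\<bar>)"
  "continuous_on UNIV (\<lambda>x::nat \<Rightarrow> real. \<bar>x s - k * x t\<bar>)"
  by (intro continuous_intros continuous_on_component)+

lemma continuous_on_cusum_max: "T \<ge> 2 \<Longrightarrow> continuous_on UNIV (cusum_max T sig)"
  unfolding cusum_max_def[abs_def]
  by (intro continuous_on_mult_left continuous_on_Max_image continuous_on_abs_lin_comb) auto

lemma continuous_on_ratio_num: "t \<ge> 1 \<Longrightarrow> continuous_on UNIV (ratio_num t)"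
  unfolding ratio_num_def[abs_def] by (intro continuous_on_Max_image continuous_on_abs_lin_comb) auto

lemma continuous_on_ratio_den: "t < T \<Longrightarrow> continuous_on UNIV (ratio_den T t)"
  unfolding ratio_den_def[abs_def] by (intro continuous_on_Max_image continuous_on_abs_lin_comb) auto

lemma ratio_den_nonneg: "t < T \<Longrightarrow> 0 \<le> ratio_den T t x"
  unfolding ratio_den_def by (rule Max_image_abs_nonneg) auto

lemma continuous_on_ratio_max_trunc:
  assumes "d > 0" "T \<ge> 4"
  shows "continuous_on UNIV (ratio_max_trunc T d)"
  unfolding ratio_max_trunc_def[abs_def] using assms
  by (intro continuous_on_Max_image continuous_on_divide continuous_on_max continuous_on_const
      continuous_on_ratio_num continuous_on_ratio_den) auto

lemma ratio_max_trunc_eq: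
  "(\<And>t. t \<in> {2..T-2} \<Longrightarrow> d \<le> ratio_den T t x) \<Longrightarrow> ratio_max_trunc T d x = ratio_max T x"
  unfolding ratio_max_trunc_def ratio_max_def
  by (intro arg_cong[where f=Max] image_cong refl) (simp add: max_def)

lemma borel_measurable_ratio_max: "T \<ge> 4 \<Longrightarrow> ratio_max T \<in> borel_measurable borel"
  unfolding ratio_max_def[abs_def]
  by (intro borel_measurable_Max borel_measurable_divide borel_measurable_continuous_onI
      continuous_on_ratio_num continuous_on_ratio_den) auto

lemma ratio_max_linear:
  assumes T: "T \<ge> 4" and lin: "\<And>u. u \<in> {1..T} \<Longrightarrow> x u = real u * a"
  shows "ratio_max T x = 0"
proof -
  have "ratio_num t x = 0" if t: "t \<in> {2..T-2}" for t
    unfolding ratio_num_def using t T by (intro Max_image_eq_0) (auto simp: lin)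
  moreover have "ratio_den T t x = 0" if t: "t \<in> {2..T-2}" for t
    unfolding ratio_den_def
  proof (intro Max_image_eq_0)
    fix s assume s: "s \<in> {t..T-1}"
    have "real T - real t \<noteq> 0" using t T by auto
    then have "(real T - real s) / (real T - real t) * ((real T - real t) * a) = (real T - real s) * a"
      by simp
    moreover have "x T = real T * a" "x s = real s * a" "x t = real t * a"
      using s t T by (auto simp: lin)
    ultimately show "\<bar>(x T - x s) - (real T - real s) / (real T - real t) * (x T - x t)\<bar> = 0"
      by (simp add: algebra_simps)
  qed (use t T in auto)
  ultimately show ?thesis unfolding ratio_max_def using T by (intro Max_image_eq_0) auto
qed

lemma ratio_den_eq_0_imp:
  assumes t: "t \<in> {2..T-2}" and T: "T \<ge> 4" and den: "ratio_den T t x = 0"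
  shows "x (t+2) - 2 * x (t+1) + x t = 0"
proof -
  have comp: "(x T - x s) - (real T - real s) / (real T - real t) * (x T - x t) = 0"
    if "s \<in> {t..T-1}" for s
  proof -
    have "\<bar>(x T - x s) - (real T - real s) / (real T - real t) * (x T - x t)\<bar> \<le> ratio_den T t x"
      unfolding ratio_den_def using that by (intro Max_ge) auto
    then show ?thesis using den by simp
  qed
  define k where "k = real T - real t"
  have k: "k \<ge> 2" using t T by (auto simp: k_def)
  have "t + 1 \<in> {t..T-1}" using t T by auto
  from comp[OF this] have c1: "(x T - x (t+1)) - (k - 1) / k * (x T - x t) = 0"
    using t T by (simp add: k_def algebra_simps)
  show ?thesis
  proof (cases "t + 2 \<le> T - 1")
    case True
    then have "t + 2 \<in> {t..T-1}" by auto
    from comp[OF this] have c2: "(x T - x (t+2)) - (k - 2) / k * (x T - x t) = 0"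
      using True t T by (simp add: k_def algebra_simps)
    have "x (t+1) - x t = (x T - x t) / k"
      using c1 k by (simp add: field_simps; simp add: algebra_simps)
    moreover have "x (t+2) - x (t+1) = (x T - x t) / k"
      using c1 c2 k by (simp add: field_simps; simp add: algebra_simps)
    ultimately show ?thesis by simp
  next
    case False
    then have "T = t + 2" "k = 2" using t T by (auto simp: k_def)
    then show ?thesis using c1 by (simp add: field_simps; simp add: algebra_simps)
  qed
qed

section \<open>Independent panels of errors\<close>

lemma (in prob_space) indep_sets_reindex:
  assumes inj: "inj_on f I" and ind: "indep_sets F (f ` I)"
  shows "indep_sets (\<lambda>i. F (f i)) I"
  unfolding indep_sets_def
proof (intro conjI ballI allI impI)
  fix i assume "i \<in> I" then show "F (f i) \<subseteq> events" using ind by (auto simp: indep_sets_def)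
next
  fix J A assume J: "J \<subseteq> I" "J \<noteq> {}" "finite J" and A: "A \<in> Pi J (\<lambda>i. F (f i))"
  define A' where "A' k = A (the_inv_into J f k)" for k
  have injJ: "inj_on f J" using inj J(1) by (rule inj_on_subset)
  have A'f: "A' (f j) = A j" if "j \<in> J" for j
    unfolding A'_def using the_inv_into_f_f[OF injJ that] by simp
  have "A' \<in> Pi (f ` J) F" using A A'f by auto
  then have "prob (\<Inter>k\<in>f ` J. A' k) = (\<Prod>k\<in>f ` J. prob (A' k))"
    using ind J unfolding indep_sets_def by (metis finite_imageI image_is_empty image_mono)
  moreover have "(\<Inter>k\<in>f ` J. A' k) = (\<Inter>j\<in>J. A j)" using A'f by auto
  moreover have "(\<Prod>k\<in>f ` J. prob (A' k)) = (\<Prod>j\<in>J. prob (A j))"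
    using A'f by (simp add: prod.reindex[OF injJ])
  ultimately show "prob (\<Inter>j\<in>J. A j) = (\<Prod>j\<in>J. prob (A j))" by simp
qed

lemma (in prob_space) indep_vars_reindex:
  assumes "inj_on f I" "indep_vars (\<lambda>_. N) X (f ` I)"
  shows "indep_vars (\<lambda>_. N) (\<lambda>i. X (f i)) I"
  using assms unfolding indep_vars_def2 by (auto intro: indep_sets_reindex[where F="\<lambda>i. _ i", simplified])

lemma integral_double_sum:
  fixes f :: "'i \<Rightarrow> 'j \<Rightarrow> 'a \<Rightarrow> real"
  assumes "finite S" "finite U" "\<And>s u. s \<in> S \<Longrightarrow> u \<in> U \<Longrightarrow> integrable M (f s u)"
  shows "(\<integral>\<omega>. (\<Sum>s\<in>S. \<Sum>u\<in>U. f s u \<omega>) \<partial>M) = (\<Sum>s\<in>S. \<Sum>u\<in>U. \<integral>\<omega>. f s u \<omega> \<partial>M)"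
  using assms by (simp add: Bochner_Integration.integral_sum Bochner_Integration.integrable_sum)

locale iid_error_panel = prob_space M for M :: "'a measure" +
  fixes eps :: "nat \<Rightarrow> nat \<Rightarrow> 'a \<Rightarrow> real" and T :: nat and rho :: "nat \<Rightarrow> real"
  assumes meas: "\<And>i t. i \<ge> 1 \<Longrightarrow> t \<in> {1..T} \<Longrightarrow> eps i t \<in> borel_measurable M"
    and indep: "indep_vars (\<lambda>_. PiM {1..T} (\<lambda>_. borel)) (\<lambda>i \<omega>. \<lambda>t\<in>{1..T}. eps i t \<omega>) {1..}"
    and ident: "\<And>i j. i \<ge> 1 \<Longrightarrow> j \<ge> 1 \<Longrightarrow>
                  distr M (PiM {1..T} (\<lambda>_. borel)) (\<lambda>\<omega>. \<lambda>t\<in>{1..T}. eps i t \<omega>) =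
                  distr M (PiM {1..T} (\<lambda>_. borel)) (\<lambda>\<omega>. \<lambda>t\<in>{1..T}. eps j t \<omega>)"
    and sq_int: "\<And>i t. i \<ge> 1 \<Longrightarrow> t \<in> {1..T} \<Longrightarrow> integrable M (\<lambda>\<omega>. (eps i t \<omega>)\<^sup>2)"
    and mean0: "\<And>i t. i \<ge> 1 \<Longrightarrow> t \<in> {1..T} \<Longrightarrow> (\<integral>\<omega>. eps i t \<omega> \<partial>M) = 0"
    and var1: "\<And>i t. i \<ge> 1 \<Longrightarrow> t \<in> {1..T} \<Longrightarrow> variance (eps i t) = 1"
    and autocov: "\<And>i s k. i \<ge> 1 \<Longrightarrow> 1 \<le> s \<Longrightarrow> s + k \<le> T \<Longrightarrow>
       (\<integral>\<omega>. (eps i s \<omega> - (\<integral>x. eps i s x \<partial>M)) * (eps i (s + k) \<omega> - (\<integral>x. eps i (s + k) x \<partial>M)) \<partial>M)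
         = rho k"
begin

lemma integrable_eps_mult:
  assumes "i \<ge> 1" "s \<in> {1..T}" "u \<in> {1..T}"
  shows "integrable M (\<lambda>\<omega>. eps i s \<omega> * eps i u \<omega>)"
proof (rule Bochner_Integration.integrable_bound)
  show "integrable M (\<lambda>\<omega>. (eps i s \<omega>)\<^sup>2 + (eps i u \<omega>)\<^sup>2)"
    using sq_int assms by auto
  show "(\<lambda>\<omega>. eps i s \<omega> * eps i u \<omega>) \<in> borel_measurable M"
    using meas assms by (intro borel_measurable_times) auto
  show "AE \<omega> in M. norm (eps i s \<omega> * eps i u \<omega>) \<le> norm ((eps i s \<omega>)\<^sup>2 + (eps i u \<omega>)\<^sup>2)"
  proof (intro AE_I2)
    fix \<omega>
    have "0 \<le> (\<bar>eps i s \<omega>\<bar> - \<bar>eps i u \<omega>\<bar>)\<^sup>2" by simp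
    then have "\<bar>eps i s \<omega>\<bar> * \<bar>eps i u \<omega>\<bar> \<le> (eps i s \<omega>)\<^sup>2 + (eps i u \<omega>)\<^sup>2"
      by (simp add: power2_eq_square algebra_simps) (smt (verit) mult_nonneg_nonneg abs_ge_zero)
    then show "norm (eps i s \<omega> * eps i u \<omega>) \<le> norm ((eps i s \<omega>)\<^sup>2 + (eps i u \<omega>)\<^sup>2)"
      by (simp add: abs_mult)
  qed
qed

lemma expectation_eps_mult:
  assumes "i \<ge> 1" "s \<in> {1..T}" "u \<in> {1..T}"
  shows "(\<integral>\<omega>. eps i s \<omega> * eps i u \<omega> \<partial>M) = rho (lag s u)"
proof (cases "s \<le> u")
  case True
  then show ?thesis
    using autocov[of i s "u - s"] mean0[of i s] mean0[of i u] assms by (simp add: lag_def)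
next
  case False
  then show ?thesis
    using autocov[of i u "s - u"] mean0[of i s] mean0[of i u] assms by (simp add: lag_def mult.commute)
qed

lemma rho_0: "T \<ge> 1 \<Longrightarrow> rho 0 = 1"
  using expectation_eps_mult[of 1 1 1] var1[of 1 1] mean0[of 1 1]
  by (simp add: lag_def power2_eq_square)

definition psum :: "nat \<Rightarrow> nat \<Rightarrow> 'a \<Rightarrow> real" where
  "psum i t \<omega> = (\<Sum>s\<in>{1..t}. eps i s \<omega>)"

lemma psum_1 [simp]: "psum i (Suc 0) \<omega> = eps i (Suc 0) \<omega>"
  by (simp add: psum_def)

lemma borel_measurable_psum: "i \<ge> 1 \<Longrightarrow> t \<le> T \<Longrightarrow> psum i t \<in> borel_measurable M"
  unfolding psum_def using meas by (intro borel_measurable_sum) auto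

lemma integrable_psum: "i \<ge> 1 \<Longrightarrow> t \<le> T \<Longrightarrow> integrable M (psum i t)"
  unfolding psum_def[abs_def]
  using square_integrable_imp_integrable[OF meas sq_int] by (intro Bochner_Integration.integrable_sum) auto

lemma expectation_psum: "i \<ge> 1 \<Longrightarrow> t \<le> T \<Longrightarrow> (\<integral>\<omega>. psum i t \<omega> \<partial>M) = 0"
  unfolding psum_def using square_integrable_imp_integrable[OF meas sq_int] mean0
  by (simp add: Bochner_Integration.integral_sum)

lemma psum_mult: "psum i t \<omega> * psum i v \<omega> = (\<Sum>s\<in>{1..t}. \<Sum>u\<in>{1..v}. eps i s \<omega> * eps i u \<omega>)"
  unfolding psum_def by (simp add: sum_product)

lemma integrable_psum_mult:
  "i \<ge> 1 \<Longrightarrow> t \<le> T \<Longrightarrow> v \<le> T \<Longrightarrow> integrable M (\<lambda>\<omega>. psum i t \<omega> * psum i v \<omega>)"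
  unfolding psum_mult by (intro Bochner_Integration.integrable_sum integrable_eps_mult) auto

lemma expectation_psum_mult:
  assumes "i \<ge> 1" "t \<le> T" "v \<le> T"
  shows "(\<integral>\<omega>. psum i t \<omega> * psum i v \<omega> \<partial>M) = Lam rho t v"
proof -
  have "(\<integral>\<omega>. psum i t \<omega> * psum i v \<omega> \<partial>M) = (\<Sum>s\<in>{1..t}. \<Sum>u\<in>{1..v}. \<integral>\<omega>. eps i s \<omega> * eps i u \<omega> \<partial>M)"
    unfolding psum_mult using assms by (intro integral_double_sum integrable_eps_mult) auto
  also have "\<dots> = lag_sum rho t v"
    unfolding lag_sum_def using assms by (intro sum.cong refl) (simp add: expectation_eps_mult)
  finally show ?thesis by (simp add: Lam_eq_lag_sum)
qed

definition Lam_form :: "(nat \<Rightarrow> real) \<Rightarrow> real" where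
  "Lam_form c = (\<Sum>t\<in>{1..T}. \<Sum>v\<in>{1..T}. c t * c v * Lam rho t v)"

definition psum_comb :: "(nat \<Rightarrow> real) \<Rightarrow> nat \<Rightarrow> 'a \<Rightarrow> real" where
  "psum_comb c i \<omega> = (\<Sum>t\<in>{1..T}. c t * psum i t \<omega>)"

lemma borel_measurable_psum_comb: "i \<ge> 1 \<Longrightarrow> psum_comb c i \<in> borel_measurable M"
  unfolding psum_comb_def using borel_measurable_psum by (intro borel_measurable_sum borel_measurable_times) auto

lemma psum_comb_square:
  "(psum_comb c i \<omega>)\<^sup>2 = (\<Sum>t\<in>{1..T}. \<Sum>v\<in>{1..T}. c t * c v * (psum i t \<omega> * psum i v \<omega>))"
  unfolding psum_comb_def power2_eq_square sum_product by (simp add: algebra_simps)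

lemma integrable_psum_comb_square: "i \<ge> 1 \<Longrightarrow> integrable M (\<lambda>\<omega>. (psum_comb c i \<omega>)\<^sup>2)"
  unfolding psum_comb_square
  by (intro Bochner_Integration.integrable_sum integrable_mult_right integrable_psum_mult) auto

lemma expectation_psum_comb_square: "i \<ge> 1 \<Longrightarrow> (\<integral>\<omega>. (psum_comb c i \<omega>)\<^sup>2 \<partial>M) = Lam_form c"
  unfolding psum_comb_square Lam_form_def
  by (subst integral_double_sum) (auto intro!: integrable_mult_right integrable_psum_mult sum.cong
      simp: expectation_psum_mult)

lemma expectation_psum_comb: "i \<ge> 1 \<Longrightarrow> (\<integral>\<omega>. psum_comb c i \<omega> \<partial>M) = 0"
  unfolding psum_comb_def using integrable_psum expectation_psum
  by (simp add: Bochner_Integration.integral_sum)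

lemma Lam_form_nonneg: "T \<ge> 1 \<Longrightarrow> Lam_form c \<ge> 0"
  using expectation_psum_comb_square[of 1 c] by (metis integral_nonneg_AE AE_I2 zero_le_power2 le_refl)

lemma psum_comb_AE_eq_0:
  assumes "Lam_form c = 0" "i \<ge> 1"
  shows "AE \<omega> in M. psum_comb c i \<omega> = 0"
proof -
  have "AE \<omega> in M. (psum_comb c i \<omega>)\<^sup>2 = 0"
    using integral_nonneg_eq_0_iff_AE[OF integrable_psum_comb_square[OF assms(2)]]
      expectation_psum_comb_square[OF assms(2)] assms(1) by simp
  then show ?thesis by simp
qed

definition psum_comb_fun :: "(nat \<Rightarrow> real) \<Rightarrow> (nat \<Rightarrow> real) \<Rightarrow> real" where
  "psum_comb_fun c y = (\<Sum>t\<in>{1..T}. c t * (\<Sum>s\<in>{1..t}. y s))"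

lemma psum_comb_eq_fun: "psum_comb c i \<omega> = psum_comb_fun c (\<lambda>t\<in>{1..T}. eps i t \<omega>)"
  unfolding psum_comb_def psum_comb_fun_def psum_def by (intro sum.cong refl) auto

lemma borel_measurable_psum_comb_fun: "psum_comb_fun c \<in> borel_measurable (PiM {1..T} (\<lambda>_. borel))"
  unfolding psum_comb_fun_def[abs_def]
  by (intro borel_measurable_sum borel_measurable_times borel_measurable_const
      measurable_component_singleton) auto

lemma indep_vars_psum_comb: "indep_vars (\<lambda>_. borel) (\<lambda>n. psum_comb c (Suc n)) UNIV"
proof -
  have "{1..} = Suc ` UNIV" by (auto simp: image_iff Suc_le_D)
  then have "indep_vars (\<lambda>_. borel) (psum_comb c) (Suc ` UNIV)"
    unfolding psum_comb_eq_fun[abs_def]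
    using indep_vars_compose2[OF indep borel_measurable_psum_comb_fun] by simp
  then show ?thesis by (rule indep_vars_reindex[rotated]) simp
qed

lemma distr_psum_comb: "i \<ge> 1 \<Longrightarrow> distr M borel (psum_comb c i) = distr M borel (psum_comb c 1)"
proof -
  have "distr M borel (psum_comb c j) =
      distr (distr M (PiM {1..T} (\<lambda>_. borel)) (\<lambda>\<omega>. \<lambda>t\<in>{1..T}. eps j t \<omega>)) borel (psum_comb_fun c)"
    if "j \<ge> 1" for j
    using distr_distr[OF borel_measurable_psum_comb_fun, of "\<lambda>\<omega>. \<lambda>t\<in>{1..T}. eps j t \<omega>" M] meas that
    unfolding psum_comb_eq_fun[abs_def] comp_def by (simp add: measurable_restrict)
  then show "i \<ge> 1 \<Longrightarrow> ?thesis" using ident[of i 1] by simp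
qed

lemma charfun_sum_psum_comb_degenerate:
  assumes "Lam_form c = 0"
  shows "(CLINT \<omega>|M. iexp ((\<Sum>i\<in>{1..N}. psum_comb c i \<omega>) / sqrt N)) = 1"
proof -
  have "(CLINT \<omega>|M. iexp ((\<Sum>i\<in>{1..N}. psum_comb c i \<omega>) / sqrt N)) = (CLINT \<omega>|M. 1)"
  proof (rule integral_cong_AE)
    have "AE \<omega> in M. \<forall>i\<in>{1..N}. psum_comb c i \<omega> = 0"
      by (rule AE_finite_allI) (use psum_comb_AE_eq_0[OF assms] in auto)
    then show "AE \<omega> in M. iexp ((\<Sum>i\<in>{1..N}. psum_comb c i \<omega>) / sqrt N) = 1"
      by eventually_elim simp
    have "(\<lambda>\<omega>. (\<Sum>i\<in>{1..N}. psum_comb c i \<omega>) / sqrt N) \<in> borel_measurable M"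
      using borel_measurable_psum_comb by (intro borel_measurable_divide borel_measurable_sum) auto
    then show "(\<lambda>\<omega>. iexp ((\<Sum>i\<in>{1..N}. psum_comb c i \<omega>) / sqrt N)) \<in> borel_measurable M"
      by (rule measurable_compose) (intro borel_measurable_continuous_onI continuous_intros)
  qed simp
  then show ?thesis by (simp add: prob_space)
qed

lemma charfun_sum_psum_comb_tendsto:
  assumes T: "T \<ge> 1"
  shows "(\<lambda>N. CLINT \<omega>|M. iexp ((\<Sum>i\<in>{1..N}. psum_comb c i \<omega>) / sqrt N))
           \<longlonglongrightarrow> complex_of_real (exp (- Lam_form c / 2))"
proof (cases "Lam_form c = 0")
  case True
  then show ?thesis by (simp only: charfun_sum_psum_comb_degenerate) simp
next
  case False
  then have "Lam_form c > 0" using Lam_form_nonneg[OF T, of c] by linarith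
  define \<sigma> where "\<sigma> = sqrt (Lam_form c)"
  have \<sigma>: "\<sigma> > 0" "\<sigma>\<^sup>2 = Lam_form c" using \<open>Lam_form c > 0\<close> by (auto simp: \<sigma>_def)
  define S where "S n x = (\<Sum>i<n. psum_comb c (Suc i) x) / sqrt (real n * \<sigma>\<^sup>2)" for n x
  have S[measurable]: "S n \<in> borel_measurable M" for n
    unfolding S_def using borel_measurable_psum_comb by (intro borel_measurable_divide borel_measurable_sum) auto
  have "weak_conv_m (\<lambda>n. distr M borel (S n)) std_normal_distribution"
    unfolding S_def
  proof (rule central_limit_theorem_zero_mean[where \<mu>="distr M borel (psum_comb c 1)" and \<sigma>=\<sigma>])
    show "indep_vars (\<lambda>i. borel) (\<lambda>i. psum_comb c (Suc i)) UNIV" by (rule indep_vars_psum_comb)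
    show "expectation (psum_comb c (Suc n)) = 0" for n by (rule expectation_psum_comb) simp
    show "0 < \<sigma>" by (rule \<sigma>)
    show "integrable M (\<lambda>x. (psum_comb c (Suc n) x)\<^sup>2)" for n by (rule integrable_psum_comb_square) simp
    show "variance (psum_comb c (Suc n)) = \<sigma>\<^sup>2" for n
      using expectation_psum_comb[of "Suc n" c] expectation_psum_comb_square[of "Suc n" c] \<sigma> by simp
    show "distr M borel (psum_comb c (Suc n)) = distr M borel (psum_comb c 1)" for n
      by (rule distr_psum_comb) simp
  qed
  then have "(\<lambda>n. char (distr M borel (S n)) \<sigma>) \<longlonglongrightarrow> char std_normal_distribution \<sigma>"
    by (intro levy_continuity1[OF _ real_dist_normal_dist]) simp
  moreover have "\<sigma> * S n x = (\<Sum>i\<in>{1..n}. psum_comb c i x) / sqrt n" for n x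
    using \<sigma>(1) sum_bounds_lt_plus1[of "\<lambda>i. psum_comb c i x" n] by (simp add: S_def real_sqrt_mult)
  then have "char (distr M borel (S n)) \<sigma> = (CLINT \<omega>|M. iexp ((\<Sum>i\<in>{1..n}. psum_comb c i \<omega>) / sqrt n))" for n
    unfolding char_def by (subst integral_distr) simp_all
  moreover have "char std_normal_distribution \<sigma> = complex_of_real (exp (- Lam_form c / 2))"
    using \<sigma> by (simp add: char_std_normal_distribution)
  ultimately show ?thesis by simp
qed

definition std_psum_vec :: "nat \<Rightarrow> 'a \<Rightarrow> nat \<Rightarrow> real" where
  "std_psum_vec N \<omega> = (\<lambda>t. if t \<in> {1..T} then (\<Sum>i\<in>{1..N}. psum i t \<omega>) / sqrt N else 0)"

lemma sum_psum_eq_std_psum_vec: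
  "t \<in> {1..T} \<Longrightarrow> (\<Sum>i\<in>{1..N}. psum i t \<omega>) = sqrt N * std_psum_vec N \<omega> t"
  by (cases "N = 0") (auto simp: std_psum_vec_def)

lemma std_psum_vec_0: "std_psum_vec 0 \<omega> = (\<lambda>_. 0)"
  by (auto simp: std_psum_vec_def)

lemma borel_measurable_std_psum_vec: "std_psum_vec N \<in> borel_measurable M"
proof (rule measurable_coordinatewise_then_product)
  fix t
  show "(\<lambda>\<omega>. std_psum_vec N \<omega> t) \<in> borel_measurable M"
  proof (cases "t \<in> {1..T}")
    case True
    then show ?thesis
      using borel_measurable_psum by (auto simp: std_psum_vec_def intro!: borel_measurable_divide borel_measurable_sum)
  next
    case False
    then have "(\<lambda>\<omega>. std_psum_vec N \<omega> t) = (\<lambda>_. 0)" by (force simp: std_psum_vec_def)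
    then show ?thesis by simp
  qed
qed

lemma expectation_conv_std_psum_vec:
  fixes h :: "(nat \<Rightarrow> real) \<Rightarrow> real"
  assumes T: "T \<ge> 1" and gauss: "centered_mvnormal P X T (Lam rho)"
    and h: "continuous_on UNIV h" "\<And>x. \<bar>h x\<bar> \<le> B"
  shows "(\<lambda>N. \<integral>\<omega>. h (std_psum_vec N \<omega>) \<partial>M) \<longlonglongrightarrow> (\<integral>\<omega>. h (coord_vec T X \<omega>) \<partial>P)"
proof (rule charfun_conv_imp_expectation_conv[OF prob_space_axioms _ finite_atLeastAtMost
      borel_measurable_std_psum_vec _ _ _ _ h])
  show "prob_space P" and "coord_vec T X \<in> borel_measurable P"
    using gauss unfolding centered_mvnormal_def by (auto intro: borel_measurable_coord_vec)
  show "std_psum_vec N \<omega> t = 0" if "t \<notin> {1..T}" for N \<omega> t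
    using that unfolding std_psum_vec_def by (simp only: if_False)
  show "coord_vec T X \<omega> t = 0" if "t \<notin> {1..T}" for \<omega> t
    using that unfolding coord_vec_def by (simp only: if_False)
  fix c :: "nat \<Rightarrow> real"
  have "(\<Sum>t\<in>{1..T}. c t * std_psum_vec N \<omega> t) = (\<Sum>i\<in>{1..N}. psum_comb c i \<omega>) / sqrt N" for N \<omega>
    unfolding std_psum_vec_def psum_comb_def
    by (simp add: sum_divide_distrib sum_distrib_left) (rule sum.swap)
  moreover have "(CLINT \<omega>|P. iexp (\<Sum>t\<in>{1..T}. c t * coord_vec T X \<omega> t)) = complex_of_real (exp (- Lam_form c / 2))"
    using gauss unfolding centered_mvnormal_def Lam_form_def coord_vec_def by simp
  ultimately show "(\<lambda>N. CLINT \<omega>|M. iexp (\<Sum>t\<in>{1..T}. c t * std_psum_vec N \<omega> t))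
      \<longlonglongrightarrow> (CLINT \<omega>|P. iexp (\<Sum>t\<in>{1..T}. c t * coord_vec T X \<omega> t))"
    using charfun_sum_psum_comb_tendsto[OF T] by simp
qed

lemma panelY_no_change: "s \<le> T \<Longrightarrow> panelY mu delta T sig eps i s \<omega> = mu i + sig * eps i s \<omega>"
  by (simp add: panelY_def)

lemma sum_eps_tail: "s \<le> T \<Longrightarrow> (\<Sum>r\<in>{s+1..T}. eps i r \<omega>) = psum i T \<omega> - psum i s \<omega>"
proof -
  assume "s \<le> T"
  then have "{1..T} = {1..s} \<union> {s+1..T}" by auto
  then have "psum i T \<omega> = psum i s \<omega> + (\<Sum>r\<in>{s+1..T}. eps i r \<omega>)"
    unfolding psum_def by (simp add: sum.union_disjoint ivl_disj_int)
  then show ?thesis by simp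
qed

lemma Ybar_panelY:
  assumes "1 \<le> u" "u \<le> T"
  shows "Ybar (panelY mu delta T sig eps) i u \<omega> = mu i + sig * psum i u \<omega> / real u"
proof -
  have "(\<Sum>s\<in>{1..u}. panelY mu delta T sig eps i s \<omega>) = (\<Sum>s\<in>{1..u}. mu i + sig * eps i s \<omega>)"
    using assms by (intro sum.cong) (auto simp: panelY_no_change)
  also have "\<dots> = real u * mu i + sig * psum i u \<omega>"
    by (simp add: sum.distrib psum_def sum_distrib_left)
  finally show ?thesis unfolding Ybar_def using assms by (simp add: field_simps)
qed

lemma Ytil_panelY:
  assumes "t < T"
  shows "Ytil T (panelY mu delta T sig eps) i t \<omega> =
           mu i + sig * (psum i T \<omega> - psum i t \<omega>) / (real T - real t)"
proof -
  have "(\<Sum>s\<in>{t+1..T}. panelY mu delta T sig eps i s \<omega>) = (\<Sum>s\<in>{t+1..T}. mu i + sig * eps i s \<omega>)"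
    by (intro sum.cong) (auto simp: panelY_no_change)
  also have "\<dots> = (real T - real t) * mu i + sig * (psum i T \<omega> - psum i t \<omega>)"
    using assms sum_eps_tail[of t i \<omega>] by (simp add: sum.distrib sum_distrib_left[symmetric] of_nat_diff)
  finally show ?thesis unfolding Ytil_def using assms by (simp add: field_simps)
qed

lemma sum_centered_head:
  assumes "1 \<le> u" "u \<le> T" "s \<le> T"
  shows "(\<Sum>r\<in>{1..s}. panelY mu delta T sig eps i r \<omega> - Ybar (panelY mu delta T sig eps) i u \<omega>)
         = sig * (psum i s \<omega> - real s / real u * psum i u \<omega>)"
proof -
  have "(\<Sum>r\<in>{1..s}. panelY mu delta T sig eps i r \<omega> - Ybar (panelY mu delta T sig eps) i u \<omega>)
      = (\<Sum>r\<in>{1..s}. sig * eps i r \<omega> - sig * psum i u \<omega> / real u)"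
    using assms by (intro sum.cong) (auto simp: panelY_no_change Ybar_panelY)
  also have "\<dots> = sig * (psum i s \<omega> - real s / real u * psum i u \<omega>)"
    by (simp add: sum_subtractf psum_def sum_distrib_left sum_divide_distrib algebra_simps)
  finally show ?thesis .
qed

lemma sum_centered_tail:
  assumes "t < T" "s \<le> T"
  shows "(\<Sum>r\<in>{s+1..T}. panelY mu delta T sig eps i r \<omega> - Ytil T (panelY mu delta T sig eps) i t \<omega>)
         = sig * ((psum i T \<omega> - psum i s \<omega>) - (real T - real s) / (real T - real t) * (psum i T \<omega> - psum i t \<omega>))"
proof -
  have "(\<Sum>r\<in>{s+1..T}. panelY mu delta T sig eps i r \<omega> - Ytil T (panelY mu delta T sig eps) i t \<omega>)
      = (\<Sum>r\<in>{s+1..T}. sig * eps i r \<omega> - sig * (psum i T \<omega> - psum i t \<omega>) / (real T - real t))"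
    using assms by (intro sum.cong) (auto simp: panelY_no_change Ytil_panelY)
  also have "\<dots> = sig * (psum i T \<omega> - psum i s \<omega>)
      - (real T - real s) * (sig * (psum i T \<omega> - psum i t \<omega>) / (real T - real t))"
    using assms sum_eps_tail[of s i \<omega>] by (simp add: sum_subtractf sum_distrib_left[symmetric] of_nat_diff)
  finally show ?thesis by (simp add: algebra_simps)
qed

lemma cross_sum_head:
  assumes "s \<in> {1..T}" "t \<in> {1..T}"
  shows "(\<Sum>i\<in>{1..N}. \<Sum>r\<in>{1..s}. panelY mu delta T sig eps i r \<omega> - Ybar (panelY mu delta T sig eps) i t \<omega>)
         = sig * sqrt N * (std_psum_vec N \<omega> s - real s / real t * std_psum_vec N \<omega> t)"
proof -
  have "(\<Sum>i\<in>{1..N}. \<Sum>r\<in>{1..s}. panelY mu delta T sig eps i r \<omega> - Ybar (panelY mu delta T sig eps) i t \<omega>)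
      = (\<Sum>i\<in>{1..N}. sig * (psum i s \<omega> - real s / real t * psum i t \<omega>))"
    using assms by (intro sum.cong refl sum_centered_head) auto
  also have "\<dots> = sig * ((\<Sum>i\<in>{1..N}. psum i s \<omega>) - real s / real t * (\<Sum>i\<in>{1..N}. psum i t \<omega>))"
    by (simp only: sum_distrib_left[symmetric] sum_subtractf)
  also have "\<dots> = sig * sqrt N * (std_psum_vec N \<omega> s - real s / real t * std_psum_vec N \<omega> t)"
    by (simp only: sum_psum_eq_std_psum_vec[OF assms(1)] sum_psum_eq_std_psum_vec[OF assms(2)])
      (simp add: algebra_simps)
  finally show ?thesis .
qed

lemma cross_sum_tail:
  assumes "s \<in> {1..T}" "t \<in> {1..T}" "t < T"
  shows "(\<Sum>i\<in>{1..N}. \<Sum>r\<in>{s+1..T}. panelY mu delta T sig eps i r \<omega> - Ytil T (panelY mu delta T sig eps) i t \<omega>)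
         = sig * sqrt N * ((std_psum_vec N \<omega> T - std_psum_vec N \<omega> s)
             - (real T - real s) / (real T - real t) * (std_psum_vec N \<omega> T - std_psum_vec N \<omega> t))"
proof -
  have "(\<Sum>i\<in>{1..N}. \<Sum>r\<in>{s+1..T}. panelY mu delta T sig eps i r \<omega> - Ytil T (panelY mu delta T sig eps) i t \<omega>)
      = (\<Sum>i\<in>{1..N}. sig * ((psum i T \<omega> - psum i s \<omega>)
          - (real T - real s) / (real T - real t) * (psum i T \<omega> - psum i t \<omega>)))"
    using assms by (intro sum.cong refl sum_centered_tail) auto
  also have "\<dots> = sig * (((\<Sum>i\<in>{1..N}. psum i T \<omega>) - (\<Sum>i\<in>{1..N}. psum i s \<omega>))
      - (real T - real s) / (real T - real t) * ((\<Sum>i\<in>{1..N}. psum i T \<omega>) - (\<Sum>i\<in>{1..N}. psum i t \<omega>)))"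
    by (simp only: sum_distrib_left[symmetric] sum_subtractf)
  also have "\<dots> = sig * sqrt N * ((std_psum_vec N \<omega> T - std_psum_vec N \<omega> s)
             - (real T - real s) / (real T - real t) * (std_psum_vec N \<omega> T - std_psum_vec N \<omega> t))"
    using assms sum_psum_eq_std_psum_vec[of T]
    by (simp only: sum_psum_eq_std_psum_vec[OF assms(1)] sum_psum_eq_std_psum_vec[OF assms(2)])
      (simp add: algebra_simps)
  finally show ?thesis .
qed

lemma statC_eq_cusum_max:
  assumes T: "T \<ge> 2" and sig: "sig > 0"
  shows "statC T (panelY mu delta T sig eps) N \<omega> = cusum_max T sig (std_psum_vec N \<omega>)"
proof (cases "N = 0")
  case True
  then show ?thesis using T by (simp add: statC_def cusum_max_def std_psum_vec_0 image_constant_conv)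
next
  case False
  have "\<bar>\<Sum>i\<in>{1..N}. \<Sum>s\<in>{1..t}. panelY mu delta T sig eps i s \<omega> - Ybar (panelY mu delta T sig eps) i T \<omega>\<bar>
      = sig * sqrt N * \<bar>std_psum_vec N \<omega> t - real t / real T * std_psum_vec N \<omega> T\<bar>"
    if "t \<in> {1..T-1}" for t
  proof -
    have "t \<in> {1..T}" "T \<in> {1..T}" using that T by auto
    from cross_sum_head[OF this] show ?thesis using sig by (simp add: abs_mult)
  qed
  then have "statC T (panelY mu delta T sig eps) N \<omega> = 1 / sqrt N *
      Max ((\<lambda>t. sig * sqrt N * \<bar>std_psum_vec N \<omega> t - real t / real T * std_psum_vec N \<omega> T\<bar>) ` {1..T-1})"
    unfolding statC_def
    by (intro arg_cong[where f="\<lambda>m. 1 / sqrt N * m"] arg_cong[where f=Max] image_cong refl)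
  also have "\<dots> = cusum_max T sig (std_psum_vec N \<omega>)"
    unfolding cusum_max_def using T sig False by (subst Max_image_const_mult) auto
  finally show ?thesis .
qed

lemma Max_cross_sum_head:
  assumes t: "t \<in> {1..T}" and sig: "sig > 0"
  shows "Max ((\<lambda>s. \<bar>\<Sum>i\<in>{1..N}. \<Sum>r\<in>{1..s}. panelY mu delta T sig eps i r \<omega>
           - Ybar (panelY mu delta T sig eps) i t \<omega>\<bar>) ` {1..t})
         = sig * sqrt N * ratio_num t (std_psum_vec N \<omega>)"
proof -
  have "\<bar>\<Sum>i\<in>{1..N}. \<Sum>r\<in>{1..s}. panelY mu delta T sig eps i r \<omega> - Ybar (panelY mu delta T sig eps) i t \<omega>\<bar>
      = sig * sqrt N * \<bar>std_psum_vec N \<omega> s - real s / real t * std_psum_vec N \<omega> t\<bar>" if "s \<in> {1..t}" for s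
  proof -
    have "s \<in> {1..T}" using that t by auto
    from cross_sum_head[OF this t] show ?thesis using sig by (simp add: abs_mult)
  qed
  then have "Max ((\<lambda>s. \<bar>\<Sum>i\<in>{1..N}. \<Sum>r\<in>{1..s}. panelY mu delta T sig eps i r \<omega>
        - Ybar (panelY mu delta T sig eps) i t \<omega>\<bar>) ` {1..t})
      = Max ((\<lambda>s. sig * sqrt N * \<bar>std_psum_vec N \<omega> s - real s / real t * std_psum_vec N \<omega> t\<bar>) ` {1..t})"
    by (intro arg_cong[where f=Max] image_cong refl)
  also have "\<dots> = sig * sqrt N * ratio_num t (std_psum_vec N \<omega>)"
    unfolding ratio_num_def using t sig by (subst Max_image_const_mult) auto
  finally show ?thesis .
qed

lemma Max_cross_sum_tail:
  assumes t: "t \<in> {1..T}" "t < T" and sig: "sig > 0"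
  shows "Max ((\<lambda>s. \<bar>\<Sum>i\<in>{1..N}. \<Sum>r\<in>{s+1..T}. panelY mu delta T sig eps i r \<omega>
           - Ytil T (panelY mu delta T sig eps) i t \<omega>\<bar>) ` {t..T-1})
         = sig * sqrt N * ratio_den T t (std_psum_vec N \<omega>)"
proof -
  have "\<bar>\<Sum>i\<in>{1..N}. \<Sum>r\<in>{s+1..T}. panelY mu delta T sig eps i r \<omega> - Ytil T (panelY mu delta T sig eps) i t \<omega>\<bar>
      = sig * sqrt N * \<bar>(std_psum_vec N \<omega> T - std_psum_vec N \<omega> s) - (real T - real s) / (real T - real t)
          * (std_psum_vec N \<omega> T - std_psum_vec N \<omega> t)\<bar>" if "s \<in> {t..T-1}" for s
  proof -
    have "s \<in> {1..T}" using that t by auto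
    from cross_sum_tail[OF this t] show ?thesis using sig by (simp add: abs_mult)
  qed
  then have "Max ((\<lambda>s. \<bar>\<Sum>i\<in>{1..N}. \<Sum>r\<in>{s+1..T}. panelY mu delta T sig eps i r \<omega>
        - Ytil T (panelY mu delta T sig eps) i t \<omega>\<bar>) ` {t..T-1})
      = Max ((\<lambda>s. sig * sqrt N * \<bar>(std_psum_vec N \<omega> T - std_psum_vec N \<omega> s) - (real T - real s) / (real T - real t)
          * (std_psum_vec N \<omega> T - std_psum_vec N \<omega> t)\<bar>) ` {t..T-1})"
    by (intro arg_cong[where f=Max] image_cong refl)
  also have "\<dots> = sig * sqrt N * ratio_den T t (std_psum_vec N \<omega>)"
    unfolding ratio_den_def using t sig by (subst Max_image_const_mult) auto
  finally show ?thesis .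
qed

lemma statR_eq_ratio_max:
  assumes T: "T \<ge> 4" and sig: "sig > 0"
  shows "statR T (panelY mu delta T sig eps) N \<omega> = ratio_max T (std_psum_vec N \<omega>)"
proof (cases "N = 0")
  case True
  then have "ratio_max T (std_psum_vec N \<omega>) = 0"
    using T by (intro ratio_max_linear[where a=0]) (simp_all add: std_psum_vec_0)
  moreover have "statR T (panelY mu delta T sig eps) N \<omega> = 0"
    using True T by (simp add: statR_def image_constant_conv)
  ultimately show ?thesis by simp
next
  case False
  have ratio: "Max ((\<lambda>s. \<bar>\<Sum>i\<in>{1..N}. \<Sum>r\<in>{1..s}. panelY mu delta T sig eps i r \<omega>
          - Ybar (panelY mu delta T sig eps) i t \<omega>\<bar>) ` {1..t})
      / Max ((\<lambda>s. \<bar>\<Sum>i\<in>{1..N}. \<Sum>r\<in>{s+1..T}. panelY mu delta T sig eps i r \<omega>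
          - Ytil T (panelY mu delta T sig eps) i t \<omega>\<bar>) ` {t..T-1})
      = ratio_num t (std_psum_vec N \<omega>) / ratio_den T t (std_psum_vec N \<omega>)" if "t \<in> {2..T-2}" for t
  proof -
    have t: "t \<in> {1..T}" "t < T" using that T by auto
    show ?thesis
      unfolding Max_cross_sum_head[OF t(1) sig] Max_cross_sum_tail[OF t sig] using False sig by simp
  qed
  show ?thesis
    unfolding statR_def ratio_max_def by (intro arg_cong[where f=Max] image_cong refl) (erule ratio)
qed

subsection \<open>The degenerate case \<open>\<rho>\<^sub>1 = 1\<close>\<close>

lemma expectation_eps_diff_square:
  assumes "i \<ge> 1" "a \<in> {1..T}" "b \<in> {1..T}"
  shows "integrable M (\<lambda>\<omega>. (eps i a \<omega> - eps i b \<omega>)\<^sup>2)"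
    and "(\<integral>\<omega>. (eps i a \<omega> - eps i b \<omega>)\<^sup>2 \<partial>M) = 2 - 2 * rho (lag a b)"
proof -
  have square: "(eps i a \<omega> - eps i b \<omega>)\<^sup>2
      = eps i a \<omega> * eps i a \<omega> - 2 * (eps i a \<omega> * eps i b \<omega>) + eps i b \<omega> * eps i b \<omega>" for \<omega>
    by (simp add: power2_eq_square algebra_simps)
  note integrable = integrable_eps_mult[OF assms(1,2,2)] integrable_eps_mult[OF assms(1,3,3)]
    integrable_eps_mult[OF assms(1,2,3)]
  show "integrable M (\<lambda>\<omega>. (eps i a \<omega> - eps i b \<omega>)\<^sup>2)"
    unfolding square using integrable by auto
  show "(\<integral>\<omega>. (eps i a \<omega> - eps i b \<omega>)\<^sup>2 \<partial>M) = 2 - 2 * rho (lag a b)"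
    unfolding square using integrable assms expectation_eps_mult[OF assms(1)] rho_0
    by (simp add: lag_def)
qed

lemma eps_AE_eq_eps_1:
  assumes rho_1: "rho 1 = 1" and i: "i \<ge> 1"
  shows "s \<in> {1..T} \<Longrightarrow> AE \<omega> in M. eps i s \<omega> = eps i 1 \<omega>"
proof (induction s)
  case (Suc s)
  show ?case
  proof (cases "s = 0")
    case False
    then have s: "s \<in> {1..T}" "Suc s \<in> {1..T}" using Suc.prems by auto
    have "AE \<omega> in M. (eps i (Suc s) \<omega> - eps i s \<omega>)\<^sup>2 = 0"
      using integral_nonneg_eq_0_iff_AE[OF expectation_eps_diff_square(1)[OF i s(2,1)]]
        expectation_eps_diff_square(2)[OF i s(2,1)] rho_1 by (simp add: lag_def)
    then show ?thesis using Suc.IH[OF s(1)] by eventually_elim simp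
  qed simp
qed simp

lemma psum_AE_linear:
  assumes "rho 1 = 1" "i \<ge> 1" "u \<in> {1..T}"
  shows "AE \<omega> in M. psum i u \<omega> = real u * eps i 1 \<omega>"
proof -
  have "AE \<omega> in M. \<forall>s\<in>{1..u}. eps i s \<omega> = eps i 1 \<omega>"
    by (rule AE_finite_allI) (use eps_AE_eq_eps_1[OF assms(1,2)] assms(3) in auto)
  then show ?thesis
  proof eventually_elim
    case (elim \<omega>)
    then have "psum i u \<omega> = (\<Sum>s\<in>{1..u}. eps i 1 \<omega>)"
      unfolding psum_def by (intro sum.cong refl) blast
    then show ?case by simp
  qed
qed

lemma ratio_max_std_psum_vec_AE_0:
  assumes "T \<ge> 4" "rho 1 = 1"
  shows "AE \<omega> in M. ratio_max T (std_psum_vec N \<omega>) = 0"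
proof -
  have "AE \<omega> in M. \<forall>i\<in>{1..N}. \<forall>u\<in>{1..T}. psum i u \<omega> = real u * eps i 1 \<omega>"
    by (intro AE_finite_allI) (use psum_AE_linear[OF assms(2)] in auto)
  then show ?thesis
  proof eventually_elim
    case (elim \<omega>)
    show ?case
    proof (rule ratio_max_linear[OF assms(1)])
      fix u assume u: "u \<in> {1..T}"
      then have "(\<Sum>i\<in>{1..N}. psum i u \<omega>) = (\<Sum>i\<in>{1..N}. real u * eps i 1 \<omega>)"
        using elim by (intro sum.cong refl) blast
      then show "std_psum_vec N \<omega> u = real u * ((\<Sum>i\<in>{1..N}. eps i 1 \<omega>) / sqrt N)"
        using u by (simp add: std_psum_vec_def sum_distrib_left)
    qed
  qed
qed

lemma ratio_max_coord_vec_AE_0: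
  assumes T: "T \<ge> 4" and rho_1: "rho 1 = 1" and gauss: "centered_mvnormal P X T (Lam rho)"
  shows "AE \<omega> in P. ratio_max T (coord_vec T X \<omega>) = 0"
proof -
  have "AE \<omega> in P. X u \<omega> = real u * X 1 \<omega>" if u: "u \<in> {1..T}" for u
  proof -
    define c :: "nat \<Rightarrow> real" where "c t = (if t = u then 1 else 0) + (if t = 1 then - real u else 0)" for t :: nat
    have sum_c: "(\<Sum>t\<in>{1..T}. c t * f t) = f u - real u * f 1" for f :: "nat \<Rightarrow> real"
      unfolding c_def distrib_right sum.distrib using u T by (simp add: sum_if_eq_mult)
    have "AE \<omega> in M. psum 1 u \<omega> = real u * eps 1 1 \<omega>"
      by (rule psum_AE_linear[OF rho_1 _ u]) simp
    then have "AE \<omega> in M. psum_comb c 1 \<omega> = 0"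
      unfolding psum_comb_def sum_c by eventually_elim simp
    then have "Lam_form c = (\<integral>\<omega>. 0 \<partial>M)"
      unfolding expectation_psum_comb_square[of 1 c, symmetric, simplified]
      using borel_measurable_psum_comb[of 1 c] by (intro integral_cong_AE) auto
    then have "AE \<omega> in P. (\<Sum>t\<in>{1..T}. c t * X t \<omega>) = 0"
      by (intro centered_mvnormal_lin_comb_AE_eq_0[OF gauss]) (simp add: Lam_form_def)
    then show ?thesis unfolding sum_c by eventually_elim simp
  qed
  then have "AE \<omega> in P. \<forall>u\<in>{1..T}. X u \<omega> = real u * X 1 \<omega>"
    by (intro AE_finite_allI) auto
  then show ?thesis
  proof eventually_elim
    case (elim \<omega>)
    show ?case
    proof (rule ratio_max_linear[OF T])
      fix u assume u: "u \<in> {1..T}"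
      then have "X u \<omega> = real u * X 1 \<omega>" using elim by blast
      then show "coord_vec T X \<omega> u = real u * X 1 \<omega>" using u by (simp add: coord_vec_def)
    qed
  qed
qed

lemma ratio_den_coord_vec_AE_pos:
  assumes T: "T \<ge> 4" and rho_1: "rho 1 \<noteq> 1" and gauss: "centered_mvnormal P X T (Lam rho)"
  shows "AE \<omega> in P. \<forall>t\<in>{2..T-2}. 0 < ratio_den T t (coord_vec T X \<omega>)"
proof (rule AE_finite_allI)
  fix t assume t: "t \<in> {2..T-2}"
  define c :: "nat \<Rightarrow> real" where "c u = (if u = t+2 then 1 else 0) + (if u = t+1 then -2 else 0) + (if u = t then 1 else 0)"
    for u :: nat
  have mem: "t+2 \<in> {1..T}" "t+1 \<in> {1..T}" "t \<in> {1..T}" using t T by auto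
  have sum_c: "(\<Sum>u\<in>{1..T}. c u * f u) = f (t+2) - 2 * f (t+1) + f t" for f :: "nat \<Rightarrow> real"
    unfolding c_def distrib_right sum.distrib using mem by (simp add: sum_if_eq_mult)
  have "psum_comb c 1 \<omega> = eps 1 (t+2) \<omega> - eps 1 (t+1) \<omega>" for \<omega>
    unfolding psum_comb_def sum_c by (simp add: psum_def)
  then have "Lam_form c = 2 - 2 * rho 1"
    using expectation_psum_comb_square[of 1 c] expectation_eps_diff_square(2)[of 1 "t+2" "t+1"] mem
    by (simp add: lag_def)
  then have "Lam_form c > 0"
    using Lam_form_nonneg[of c] T rho_1 by linarith
  then have "AE \<omega> in P. (\<Sum>u\<in>{1..T}. c u * X u \<omega>) \<noteq> 0"
    by (intro centered_mvnormal_lin_comb_AE_neq_0[OF gauss]) (simp add: Lam_form_def)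
  then show "AE \<omega> in P. 0 < ratio_den T t (coord_vec T X \<omega>)"
  proof eventually_elim
    case (elim \<omega>)
    have "ratio_den T t (coord_vec T X \<omega>) \<noteq> 0"
      using ratio_den_eq_0_imp[OF t T] elim mem unfolding sum_c by (force simp: coord_vec_def)
    moreover have "0 \<le> ratio_den T t (coord_vec T X \<omega>)" using t T by (intro ratio_den_nonneg) auto
    ultimately show ?case by linarith
  qed
qed simp

text \<open>The ratio is discontinuous where a denominator vanishes. If \<open>\<rho>\<^sub>1 = 1\<close> both the statistic and
  its limit vanish almost surely; otherwise the Gaussian limit avoids the discontinuity set.\<close>
lemma expectation_conv_ratio_max:
  fixes f :: "real \<Rightarrow> real"
  assumes T: "T \<ge> 4" and gauss: "centered_mvnormal P X T (Lam rho)"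
    and f: "continuous_on UNIV f" "\<And>x. \<bar>f x\<bar> \<le> 1"
  shows "(\<lambda>N. \<integral>\<omega>. f (ratio_max T (std_psum_vec N \<omega>)) \<partial>M) \<longlonglongrightarrow> (\<integral>\<omega>. f (ratio_max T (coord_vec T X \<omega>)) \<partial>P)"
proof -
  have P: "prob_space P" and X: "coord_vec T X \<in> borel_measurable P"
    using gauss unfolding centered_mvnormal_def by (auto intro: borel_measurable_coord_vec)
  interpret P: prob_space P by (rule P)
  have f_meas: "(\<lambda>x. f (ratio_max T x)) \<in> borel_measurable borel"
    using borel_measurable_ratio_max[OF T] borel_measurable_continuous_onI[OF f(1)] by (rule measurable_compose)
  show ?thesis
  proof (cases "rho 1 = 1")
    case True
    have "(\<integral>\<omega>. f (ratio_max T (std_psum_vec N \<omega>)) \<partial>M) = (\<integral>\<omega>. f 0 \<partial>M)" for N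
    proof (rule integral_cong_AE)
      show "(\<lambda>\<omega>. f (ratio_max T (std_psum_vec N \<omega>))) \<in> borel_measurable M"
        using borel_measurable_std_psum_vec f_meas by (rule measurable_compose)
      show "AE \<omega> in M. f (ratio_max T (std_psum_vec N \<omega>)) = f 0"
        using ratio_max_std_psum_vec_AE_0[OF T True, of N] by eventually_elim simp
    qed simp
    moreover have "(\<integral>\<omega>. f (ratio_max T (coord_vec T X \<omega>)) \<partial>P) = (\<integral>\<omega>. f 0 \<partial>P)"
    proof (rule integral_cong_AE)
      show "(\<lambda>\<omega>. f (ratio_max T (coord_vec T X \<omega>))) \<in> borel_measurable P"
        using X f_meas by (rule measurable_compose)
      show "AE \<omega> in P. f (ratio_max T (coord_vec T X \<omega>)) = f 0"
        using ratio_max_coord_vec_AE_0[OF T True gauss] by eventually_elim simp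
    qed simp
    ultimately show ?thesis by (simp add: prob_space P.prob_space)
  next
    case False
    show ?thesis
    proof (rule expectation_conv_off_zero_set[where V=std_psum_vec and G="coord_vec T X"
          and h="\<lambda>x. f (ratio_max T x)" and D="ratio_den T" and A="{2..T-2}"])
      show "prob_space M" "prob_space P" "finite {2..T-2}"
        by (simp_all add: prob_space_axioms P)
      show "std_psum_vec N \<in> borel_measurable M" for N by (rule borel_measurable_std_psum_vec)
      show "coord_vec T X \<in> borel_measurable P" by (rule X)
      show "(\<lambda>x. f (ratio_max T x)) \<in> borel_measurable borel" by (rule f_meas)
      show "\<bar>f (ratio_max T x)\<bar> \<le> 1" for x by (rule f(2))
      show "AE \<omega> in P. \<forall>t\<in>{2..T-2}. 0 < ratio_den T t (coord_vec T X \<omega>)"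
        by (rule ratio_den_coord_vec_AE_pos[OF T False gauss])
      show "(\<lambda>N. \<integral>\<omega>. g (std_psum_vec N \<omega>) \<partial>M) \<longlonglongrightarrow> (\<integral>\<omega>. g (coord_vec T X \<omega>) \<partial>P)"
        if "continuous_on UNIV g" "\<And>x. \<bar>g x\<bar> \<le> 1" for g :: "(nat \<Rightarrow> real) \<Rightarrow> real"
        using T that by (intro expectation_conv_std_psum_vec[OF _ gauss]) auto
      show "continuous_on UNIV (ratio_den T t)" "0 \<le> ratio_den T t x" if "t \<in> {2..T-2}" for t x
        using that T by (auto intro: continuous_on_ratio_den ratio_den_nonneg)
      show "\<exists>g. continuous_on UNIV g \<and> (\<forall>x. \<bar>g x\<bar> \<le> 1) \<and>
          (\<forall>x. (\<forall>t\<in>{2..T-2}. d \<le> ratio_den T t x) \<longrightarrow> g x = f (ratio_max T x))" if "d > 0" for d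
        using f(2) ratio_max_trunc_eq[of T d] continuous_on_ratio_max_trunc[OF that T]
        by (intro exI[of _ "\<lambda>x. f (ratio_max_trunc T d x)"]) (auto intro: continuous_on_compose2[OF f(1)])
    qed
  qed
qed

lemma weak_conv_statC:
  assumes T: "T \<ge> 4" and gauss: "centered_mvnormal P X T (Lam rho)" and sig: "sig > 0"
  shows "weak_conv_m (\<lambda>N. distr M borel (statC T (panelY mu delta T sig eps) N))
                     (distr P borel (limC T sig X))"
proof -
  have cusum: "continuous_on UNIV (cusum_max T sig)"
    using T by (intro continuous_on_cusum_max) auto
  have "statC T (panelY mu delta T sig eps) N = (\<lambda>\<omega>. cusum_max T sig (std_psum_vec N \<omega>))" for N
    using T sig by (intro ext statC_eq_cusum_max) auto
  moreover have "limC T sig X = (\<lambda>\<omega>. cusum_max T sig (coord_vec T X \<omega>))"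
    using T by (intro ext limC_eq_cusum_max) auto
  moreover have "weak_conv_m (\<lambda>N. distr M borel (\<lambda>\<omega>. cusum_max T sig (std_psum_vec N \<omega>)))
      (distr P borel (\<lambda>\<omega>. cusum_max T sig (coord_vec T X \<omega>)))"
    using gauss T unfolding centered_mvnormal_def
    by (intro weak_conv_distr_compI[OF prob_space_axioms _ borel_measurable_std_psum_vec
          borel_measurable_coord_vec borel_measurable_continuous_onI[OF cusum]]
        expectation_conv_std_psum_vec[OF _ gauss] continuous_on_compose2[OF _ cusum]) auto
  ultimately show ?thesis by simp
qed

lemma weak_conv_statR:
  assumes T: "T \<ge> 4" and gauss: "centered_mvnormal P X T (Lam rho)" and sig: "sig > 0"
  shows "weak_conv_m (\<lambda>N. distr M borel (statR T (panelY mu delta T sig eps) N))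
                     (distr P borel (limR T X))"
proof -
  have "statR T (panelY mu delta T sig eps) N = (\<lambda>\<omega>. ratio_max T (std_psum_vec N \<omega>))" for N
    using T sig by (intro ext statR_eq_ratio_max) auto
  moreover have "limR T X = (\<lambda>\<omega>. ratio_max T (coord_vec T X \<omega>))"
    using T by (intro ext limR_eq_ratio_max) auto
  moreover have "weak_conv_m (\<lambda>N. distr M borel (\<lambda>\<omega>. ratio_max T (std_psum_vec N \<omega>)))
      (distr P borel (\<lambda>\<omega>. ratio_max T (coord_vec T X \<omega>)))"
    using gauss T unfolding centered_mvnormal_def
    by (intro weak_conv_distr_compI[OF prob_space_axioms _ borel_measurable_std_psum_vec
          borel_measurable_coord_vec borel_measurable_ratio_max] expectation_conv_ratio_max[OF T gauss]) auto
  ultimately show ?thesis by simp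
qed

end

theorem theorem1:
  fixes M :: "'a measure" and eps :: "nat \<Rightarrow> nat \<Rightarrow> 'a \<Rightarrow> real"
    and T :: nat and sig :: real and mu delta :: "nat \<Rightarrow> real"
    and rho :: "nat \<Rightarrow> real"
    and P :: "'b measure" and X :: "nat \<Rightarrow> 'b \<Rightarrow> real"
  assumes "prob_space M"
    and T4: "T \<ge> 4"
    and sig_pos: "sig > 0"
    and meas: "\<And>i t. i \<ge> 1 \<Longrightarrow> t \<in> {1..T} \<Longrightarrow> eps i t \<in> borel_measurable M"
    and indep: "prob_space.indep_vars M (\<lambda>_. PiM {1..T} (\<lambda>_. borel))
                  (\<lambda>i \<omega>. \<lambda>t\<in>{1..T}. eps i t \<omega>) {1..}"
    and ident: "\<And>i j. i \<ge> 1 \<Longrightarrow> j \<ge> 1 \<Longrightarrow>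
                  distr M (PiM {1..T} (\<lambda>_. borel)) (\<lambda>\<omega>. \<lambda>t\<in>{1..T}. eps i t \<omega>) =
                  distr M (PiM {1..T} (\<lambda>_. borel)) (\<lambda>\<omega>. \<lambda>t\<in>{1..T}. eps j t \<omega>)"
    and sq_int: "\<And>i t. i \<ge> 1 \<Longrightarrow> t \<in> {1..T} \<Longrightarrow> integrable M (\<lambda>\<omega>. (eps i t \<omega>)\<^sup>2)"
    and mean0: "\<And>i t. i \<ge> 1 \<Longrightarrow> t \<in> {1..T} \<Longrightarrow> (\<integral>\<omega>. eps i t \<omega> \<partial>M) = 0"
    and var1: "\<And>i t. i \<ge> 1 \<Longrightarrow> t \<in> {1..T} \<Longrightarrow> prob_space.variance M (eps i t) = 1"
    and autocov: "\<And>i s k. i \<ge> 1 \<Longrightarrow> 1 \<le> s \<Longrightarrow> s + k \<le> T \<Longrightarrow>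
                  (\<integral>\<omega>. (eps i s \<omega> - (\<integral>x. eps i s x \<partial>M)) * (eps i (s + k) \<omega> - (\<integral>x. eps i (s + k) x \<partial>M)) \<partial>M) = rho k"
    and gauss: "centered_mvnormal P X T (Lam rho)"
  shows "weak_conv_m (\<lambda>N. distr M borel (statC T (panelY mu delta T sig eps) N))
                     (distr P borel (limC T sig X))
       \<and> weak_conv_m (\<lambda>N. distr M borel (statR T (panelY mu delta T sig eps) N))
                     (distr P borel (limR T X))"
proof -
  interpret iid_error_panel M eps T rho
    unfolding iid_error_panel_def iid_error_panel_axioms_def
    using assms(1) meas indep ident sq_int mean0 var1 autocov by blast
  show ?thesis
    using weak_conv_statC[OF T4 gauss sig_pos] weak_conv_statR[OF T4 gauss sig_pos] by blast
qed

end
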